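(* Let $\mathbf{A}\in\mathbb{R}^{n\times d}$, $\mathbf{B}\in\mathbb{R}^{n\times s}$, and $\nu>0$. Let $\kappa=1+\|\mathbf{A}\|^2/\nu$ and suppose that $\mathbf{A}\mathbf{A}^\top+\nu\mathbf{I}\approx_4\mathbf{B}\mathbf{B}^\top+\nu\mathbf{I}$. Then, given a $\frac{1}{160\kappa^2}$-solver $f$ for $\mathbf{A}^\top\mathbf{A}+\nu\mathbf{I}$, one can construct an $\epsilon$-solver for $\mathbf{B}^\top\mathbf{B}+\nu\mathbf{I}$ that applies $f$ at most $16\log(8\kappa/\epsilon)$ times and spends an additional $O\big((n+\mathcal{T}_{\mathbf{A}}+\mathcal{T}_{\mathbf{B}})\log(\kappa/\epsilon)\big)$ time.
   Context: For symmetric PSD $\mathbf{X},\mathbf{Y}$, $\mathbf{X}\approx_c\mathbf{Y}$ means $c^{-1}\mathbf{Y}\preceq\mathbf{X}\preceq c\mathbf{Y}$ in the Loewner order. For a symmetric positive definite $\mathbf{N}$, $\hat{\mathbf{x}}$ is an $\epsilon$-solution to $\mathbf{N}\mathbf{x}=\mathbf{b}$ if $\|\hat{\mathbf{x}}-\mathbf{N}^{-1}\mathbf{b}\|_{\mathbf{N}}^2\le\epsilon\|\mathbf{b}\|^2_{\mathbf{N}^{-1}}$ ($\|\mathbf{x}\|_{\mathbf{K}}=\sqrt{\mathbf{x}^\top\mathbf{K}\mathbf{x}}$); an $\epsilon$-solver returns an $\epsilon$-solution for every right-hand side. For a matrix $\mathbf{X}\in\mathbb{R}^{a\times b}$, $\mathcal{T}_{\mathbf{X}}$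 denotes the maximum cost of applying $\mathbf{X}$ or $\mathbf{X}^\top$ to a vector, plus $a+b$. $\|\cdot\|$ is the spectral norm; $\log$ is natural. *)

theory Defs
  imports Complex_Main "Jordan_Normal_Form.Matrix" "Jordan_Normal_Form.Gauss_Jordan_Elimination"
begin

definition qform :: "real mat \<Rightarrow> real vec \<Rightarrow> real" where
  "qform K x = x \<bullet> (K *\<^sub>v x)"

definition vnorm :: "real vec \<Rightarrow> real" where
  "vnorm v = sqrt (v \<bullet> v)"

definition spec_norm :: "real mat \<Rightarrow> real" where
  "spec_norm M = Sup ({0} \<union> {vnorm (M *\<^sub>v v) | v. dim_vec v = dim_col M \<and> vnorm v = 1})"

definition loewner_le :: "real mat \<Rightarrow> real mat \<Rightarrow> bool" where
  "loewner_le X Y \<longleftrightarrow> dim_row X = dim_col X \<and> dim_row Y = dim_row X \<and> dim_col Y = dim_col X \<and>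
     (\<forall>x. dim_vec x = dim_row X \<longrightarrow> qform X x \<le> qform Y x)"

definition spectral_approx :: "real \<Rightarrow> real mat \<Rightarrow> real mat \<Rightarrow> bool" where
  "spectral_approx c X Y \<longleftrightarrow> loewner_le ((1 / c) \<cdot>\<^sub>m Y) X \<and> loewner_le X (c \<cdot>\<^sub>m Y)"

definition mat_inv :: "real mat \<Rightarrow> real mat" where
  "mat_inv N = the (mat_inverse N)"

definition eps_solution :: "real mat \<Rightarrow> real \<Rightarrow> real vec \<Rightarrow> real vec \<Rightarrow> bool" where
  "eps_solution N eps b xh \<longleftrightarrow> dim_vec xh = dim_vec b \<and>
     qform N (xh - mat_inv N *\<^sub>v b) \<le> eps * qform (mat_inv N) b"

definition eps_solver :: "real mat \<Rightarrow> real \<Rightarrow> (real vec \<Rightarrow> real vec) \<Rightarrow> bool" where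
  "eps_solver N eps g \<longleftrightarrow> (\<forall>b. dim_vec b = dim_row N \<longrightarrow> eps_solution N eps b (g b))"

text \<open>Straight-line programs over a growing list of vector registers; register 0 holds the
  input b, each instruction appends one new register, and the output is the last register.\<close>
datatype instr = LinComb real nat real nat | MulA nat | MulAt nat | MulB nat | MulBt nat | CallF nat

definition get_reg :: "real vec list \<Rightarrow> nat \<Rightarrow> real vec" where
  "get_reg r i = (if i < length r then r ! i else 0\<^sub>v 0)"

definition mat_app :: "real mat \<Rightarrow> real vec \<Rightarrow> real vec" where
  "mat_app M u = (if dim_vec u = dim_col M then M *\<^sub>v u else 0\<^sub>v (dim_row M))"

fun step :: "real mat \<Rightarrow> real mat \<Rightarrow> (real vec \<Rightarrow> real vec) \<Rightarrow> real vec list \<Rightarrow> instr \<Rightarrow> real vec" where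
  "step A B f r (LinComb a i c j) =
     (let u = get_reg r i; w = get_reg r j in
      if dim_vec u = dim_vec w then a \<cdot>\<^sub>v u + c \<cdot>\<^sub>v w else 0\<^sub>v (dim_vec u))"
| "step A B f r (MulA i) = mat_app A (get_reg r i)"
| "step A B f r (MulAt i) = mat_app (transpose_mat A) (get_reg r i)"
| "step A B f r (MulB i) = mat_app B (get_reg r i)"
| "step A B f r (MulBt i) = mat_app (transpose_mat B) (get_reg r i)"
| "step A B f r (CallF i) = f (get_reg r i)"

text \<open>Cost of one instruction: a vector operation costs the length of the vectors; one
  application of A or A^T costs cA, of B or B^T costs cB; calls of f are counted separately.\<close>
fun instr_cost :: "real \<Rightarrow> real \<Rightarrow> real vec list \<Rightarrow> instr \<Rightarrow> real" where
  "instr_cost cA cB r (LinComb a i c j) = real (dim_vec (get_reg r i))"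
| "instr_cost cA cB r (MulA i) = cA"
| "instr_cost cA cB r (MulAt i) = cA"
| "instr_cost cA cB r (MulB i) = cB"
| "instr_cost cA cB r (MulBt i) = cB"
| "instr_cost cA cB r (CallF i) = 0"

fun exec :: "real mat \<Rightarrow> real mat \<Rightarrow> (real vec \<Rightarrow> real vec) \<Rightarrow> instr list \<Rightarrow> real vec list \<Rightarrow> real vec list" where
  "exec A B f [] r = r"
| "exec A B f (ins # p) r = exec A B f p (r @ [step A B f r ins])"

fun exec_cost :: "real mat \<Rightarrow> real mat \<Rightarrow> (real vec \<Rightarrow> real vec) \<Rightarrow> real \<Rightarrow> real \<Rightarrow> instr list \<Rightarrow> real vec list \<Rightarrow> real" where
  "exec_cost A B f cA cB [] r = 0"
| "exec_cost A B f cA cB (ins # p) r =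
     instr_cost cA cB r ins + exec_cost A B f cA cB p (r @ [step A B f r ins])"

definition run_prog :: "real mat \<Rightarrow> real mat \<Rightarrow> (real vec \<Rightarrow> real vec) \<Rightarrow> instr list \<Rightarrow> real vec \<Rightarrow> real vec" where
  "run_prog A B f p b = last (exec A B f p [b])"

definition prog_cost :: "real mat \<Rightarrow> real mat \<Rightarrow> (real vec \<Rightarrow> real vec) \<Rightarrow> real \<Rightarrow> real \<Rightarrow> instr list \<Rightarrow> real vec \<Rightarrow> real" where
  "prog_cost A B f cA cB p b = exec_cost A B f cA cB p [b]"

fun is_call :: "instr \<Rightarrow> bool" where
  "is_call (CallF i) = True"
| "is_call _ = False"

definition num_calls :: "instr list \<Rightarrow> nat" where
  "num_calls p = length (filter is_call p)"

end

(*
  Write M = A^T A + nu I, N = B^T B + nu I, P = A A^T + nu I and Q = B B^T + nu I.  The solution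
  of N x = b is x = (b - B^T y) / nu where Q y = B b, and its N-error is controlled by the Q-error
  of y.  As P and Q are 4-spectrally equivalent, P^-1 Q is self-adjoint for the Q-inner product
  with spectrum in [1/4, 4], so the degree-2 Chebyshev polynomial of that interval contracts the
  Q-error of y by 225/353 per step.  P^-1 is applied through the Woodbury identity
  P^-1 = (I - A M^-1 A^T) / nu, with M^-1 replaced by f plus one step of iterative refinement;
  this perturbs each application by at most 1/40 in the Q-norm, which keeps the contraction below
  3/4.  Each step calls f four times, and O(log (kappa / eps)) steps give an eps-solution.
*)
theory Submission
  imports Defs "Jordan_Normal_Form.Determinant"
begin

section \<open>Regularized inner products\<close>

lemma scalar_prod_self_nonneg: "0 \<le> (x::real vec) \<bullet> x"
  unfolding scalar_prod_def by (auto intro: sum_nonneg)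

lemma scalar_prod_self_eq_0: "(x::real vec) \<bullet> x = 0 \<Longrightarrow> x \<in> carrier_vec k \<Longrightarrow> x = 0\<^sub>v k"
proof -
  assume h: "x \<bullet> x = 0" and x: "x \<in> carrier_vec k"
  have "(\<Sum>i\<in>{0..<dim_vec x}. x $ i * x $ i) = 0" using h unfolding scalar_prod_def by simp
  hence "\<forall>i\<in>{0..<dim_vec x}. x $ i * x $ i = 0"
    by (subst (asm) sum_nonneg_eq_0_iff) auto
  thus ?thesis using x by (intro eq_vecI) auto
qed

lemma smult_mat_mult_vec: "M \<in> carrier_mat m k \<Longrightarrow> v \<in> carrier_vec k \<Longrightarrow>
  (a \<cdot>\<^sub>m M) *\<^sub>v v = a \<cdot>\<^sub>v ((M :: real mat) *\<^sub>v v)"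
  by (rule eq_vecI) (auto simp: scalar_prod_def sum_distrib_left mult.assoc)

definition reg_inner :: "real mat \<Rightarrow> real \<Rightarrow> real vec \<Rightarrow> real vec \<Rightarrow> real" where
  "reg_inner W c x y = (W *\<^sub>v x) \<bullet> (W *\<^sub>v y) + c * (x \<bullet> y)"

definition reg_norm :: "real mat \<Rightarrow> real \<Rightarrow> real vec \<Rightarrow> real" where
  "reg_norm W c x = sqrt (reg_inner W c x x)"

definition gram_reg :: "real mat \<Rightarrow> real \<Rightarrow> real mat" where
  "gram_reg W c = transpose_mat W * W + c \<cdot>\<^sub>m 1\<^sub>m (dim_col W)"

locale reg_form =
  fixes W :: "real mat" and m k :: nat and c :: real
  assumes W: "W \<in> carrier_mat m k" and c_pos: "0 < c"
begin

abbreviation rinner where "rinner \<equiv> reg_inner W c"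
abbreviation rnorm where "rnorm \<equiv> reg_norm W c"
abbreviation G where "G \<equiv> gram_reg W c"
abbreviation Ginv where "Ginv \<equiv> mat_inv (gram_reg W c)"

lemma inner_commute: "x \<in> carrier_vec k \<Longrightarrow> y \<in> carrier_vec k \<Longrightarrow> rinner x y = rinner y x"
  unfolding reg_inner_def using W by (simp add: comm_scalar_prod[of _ m] comm_scalar_prod[of _ k])

lemma inner_add_left: "x \<in> carrier_vec k \<Longrightarrow> y \<in> carrier_vec k \<Longrightarrow> z \<in> carrier_vec k \<Longrightarrow>
   rinner (x + y) z = rinner x z + rinner y z"
  unfolding reg_inner_def using W
  by (simp add: mult_add_distrib_mat_vec[OF W] add_scalar_prod_distrib[of _ m]
      add_scalar_prod_distrib[of _ k] algebra_simps)

lemma inner_add_right: "x \<in> carrier_vec k \<Longrightarrow> y \<in> carrier_vec k \<Longrightarrow> z \<in> carrier_vec k \<Longrightarrow>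
   rinner z (x + y) = rinner z x + rinner z y"
  using inner_add_left inner_commute by simp

lemma inner_diff_left: "x \<in> carrier_vec k \<Longrightarrow> y \<in> carrier_vec k \<Longrightarrow> z \<in> carrier_vec k \<Longrightarrow>
   rinner (x - y) z = rinner x z - rinner y z"
  unfolding reg_inner_def using W
  by (simp add: mult_minus_distrib_mat_vec[OF W] minus_scalar_prod_distrib[of _ m]
      minus_scalar_prod_distrib[of _ k] algebra_simps)

lemma inner_diff_right: "x \<in> carrier_vec k \<Longrightarrow> y \<in> carrier_vec k \<Longrightarrow> z \<in> carrier_vec k \<Longrightarrow>
   rinner z (x - y) = rinner z x - rinner z y"
  using inner_diff_left inner_commute by simp

lemma inner_scale_left: "x \<in> carrier_vec k \<Longrightarrow> z \<in> carrier_vec k \<Longrightarrow> rinner (a \<cdot>\<^sub>v x) z = a * rinner x z"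
  unfolding reg_inner_def using W by (simp add: mult_mat_vec[OF W] algebra_simps)

lemma inner_scale_right: "x \<in> carrier_vec k \<Longrightarrow> z \<in> carrier_vec k \<Longrightarrow> rinner z (a \<cdot>\<^sub>v x) = a * rinner z x"
  using inner_scale_left inner_commute by simp

lemmas inner_simps = inner_add_left inner_add_right inner_diff_left inner_diff_right
  inner_scale_left inner_scale_right

lemma inner_self_nonneg: "0 \<le> rinner x x"
  unfolding reg_inner_def using scalar_prod_self_nonneg[of x] scalar_prod_self_nonneg[of "W *\<^sub>v x"] c_pos
  by simp

lemma inner_self_ge_scalar_prod: "c * (x \<bullet> x) \<le> rinner x x"
  unfolding reg_inner_def using scalar_prod_self_nonneg[of "W *\<^sub>v x"] by simp

lemma inner_self_ge_image: "(W *\<^sub>v x) \<bullet> (W *\<^sub>v x) \<le> rinner x x"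
  unfolding reg_inner_def using scalar_prod_self_nonneg[of x] c_pos by simp

lemma inner_self_diff_commute: "x \<in> carrier_vec k \<Longrightarrow> y \<in> carrier_vec k \<Longrightarrow>
   rinner (x - y) (x - y) = rinner (y - x) (y - x)"
  by (simp add: inner_simps inner_commute[of x y])

lemma norm_diff_commute: "x \<in> carrier_vec k \<Longrightarrow> y \<in> carrier_vec k \<Longrightarrow> rnorm (x - y) = rnorm (y - x)"
  unfolding reg_norm_def by (simp add: inner_self_diff_commute)

lemma Cauchy_Schwarz: assumes x: "x \<in> carrier_vec k" and y: "y \<in> carrier_vec k"
  shows "(rinner x y)\<^sup>2 \<le> rinner x x * rinner y y"
proof -
  define a b e where "a = rinner x x" and "b = rinner x y" and "e = rinner y y"
  have quadratic: "0 \<le> a - 2 * t * b + t\<^sup>2 * e" for t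
  proof -
    have "0 \<le> rinner (x - t \<cdot>\<^sub>v y) (x - t \<cdot>\<^sub>v y)" by (rule inner_self_nonneg)
    also have "\<dots> = a - 2 * t * b + t\<^sup>2 * e"
      using x y unfolding a_def b_def e_def
      by (simp add: inner_simps inner_commute[of y x] power2_eq_square algebra_simps)
    finally show ?thesis .
  qed
  show ?thesis
  proof (cases "e = 0")
    case True
    have "b = 0"
    proof (rule ccontr)
      assume "b \<noteq> 0"
      with quadratic[of "(a + 1) / (2 * b)"] True show False by (simp add: field_simps)
    qed
    thus ?thesis using True unfolding a_def b_def e_def by simp
  next
    case False
    hence e: "0 < e" using inner_self_nonneg[of y] unfolding e_def by simp
    have "0 \<le> a - 2 * (b / e) * b + (b / e)\<^sup>2 * e" by (rule quadratic)
    also have "\<dots> = a - b\<^sup>2 / e" using e by (simp add: field_simps power2_eq_square)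
    finally show ?thesis using e unfolding a_def b_def e_def by (simp add: field_simps)
  qed
qed

lemma norm_nonneg: "0 \<le> rnorm x"
  unfolding reg_norm_def using inner_self_nonneg by simp

lemma norm_square: "(rnorm x)\<^sup>2 = rinner x x"
  unfolding reg_norm_def using inner_self_nonneg by simp

lemma inner_le_norm_mult: assumes "x \<in> carrier_vec k" and "y \<in> carrier_vec k"
  shows "rinner x y \<le> rnorm x * rnorm y"
proof (rule power2_le_imp_le)
  show "(rinner x y)\<^sup>2 \<le> (rnorm x * rnorm y)\<^sup>2"
    unfolding power_mult_distrib norm_square by (rule Cauchy_Schwarz[OF assms])
qed (simp add: norm_nonneg)

lemma norm_scale: "x \<in> carrier_vec k \<Longrightarrow> rnorm (a \<cdot>\<^sub>v x) = \<bar>a\<bar> * rnorm x"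
proof -
  assume x: "x \<in> carrier_vec k"
  have "rinner (a \<cdot>\<^sub>v x) (a \<cdot>\<^sub>v x) = a\<^sup>2 * rinner x x"
    using x by (simp add: inner_simps power2_eq_square)
  thus ?thesis unfolding reg_norm_def by (simp add: real_sqrt_mult)
qed

lemma norm_triangle: assumes x: "x \<in> carrier_vec k" and y: "y \<in> carrier_vec k"
  shows "rnorm (x + y) \<le> rnorm x + rnorm y"
proof (rule power2_le_imp_le)
  have "(rnorm (x + y))\<^sup>2 = rinner x x + 2 * rinner x y + rinner y y"
    using x y by (simp add: norm_square inner_simps inner_commute[of y x])
  also have "\<dots> \<le> (rnorm x + rnorm y)\<^sup>2"
    using inner_le_norm_mult[OF x y] by (simp add: norm_square power2_sum)
  finally show "(rnorm (x + y))\<^sup>2 \<le> (rnorm x + rnorm y)\<^sup>2" .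
qed (simp add: norm_nonneg add_nonneg_nonneg)

lemma norm_triangle_diff: assumes x: "x \<in> carrier_vec k" and y: "y \<in> carrier_vec k"
  shows "rnorm (x - y) \<le> rnorm x + rnorm y"
proof -
  have "x - y = x + (-1) \<cdot>\<^sub>v y" using x y by auto
  thus ?thesis using norm_triangle[OF x, of "(-1) \<cdot>\<^sub>v y"] norm_scale[OF y, of "-1"] y by simp
qed

lemma norm_le_iff: assumes r: "0 \<le> r"
  shows "rnorm x \<le> r * rnorm y \<longleftrightarrow> rinner x x \<le> r\<^sup>2 * rinner y y"
proof -
  have "rnorm x \<le> r * rnorm y \<longleftrightarrow> (rnorm x)\<^sup>2 \<le> (r * rnorm y)\<^sup>2"
    using r norm_nonneg[of x] norm_nonneg[of y]
    by (metis mult_nonneg_nonneg power2_le_imp_le power_mono)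
  thus ?thesis by (simp add: norm_square power_mult_distrib)
qed

text \<open>Polarization: compare the quadratic form of \<open>X\<close> at \<open>x + y\<close> and \<open>x - y\<close>, where \<open>y = X x / h\<close>.\<close>
lemma self_adjoint_norm_bound:
  assumes h: "0 < h"
    and X_carrier: "\<And>x. x \<in> carrier_vec k \<Longrightarrow> X x \<in> carrier_vec k"
    and X_add: "\<And>x y. x \<in> carrier_vec k \<Longrightarrow> y \<in> carrier_vec k \<Longrightarrow> X (x + y) = X x + X y"
    and X_diff: "\<And>x y. x \<in> carrier_vec k \<Longrightarrow> y \<in> carrier_vec k \<Longrightarrow> X (x - y) = X x - X y"
    and X_self_adjoint: "\<And>x y. x \<in> carrier_vec k \<Longrightarrow> y \<in> carrier_vec k \<Longrightarrow> rinner (X x) y = rinner x (X y)"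
    and X_range: "\<And>x. x \<in> carrier_vec k \<Longrightarrow> \<bar>rinner (X x) x\<bar> \<le> h * rinner x x"
    and x: "x \<in> carrier_vec k"
  shows "rinner (X x) (X x) \<le> h\<^sup>2 * rinner x x"
proof -
  define y where "y = (1 / h) \<cdot>\<^sub>v X x"
  have y: "y \<in> carrier_vec k" and Xx: "X x \<in> carrier_vec k"
    unfolding y_def using X_carrier[OF x] by auto
  have Xy: "X y \<in> carrier_vec k" using X_carrier[OF y] .
  define a e where "a = rinner x x" and "e = rinner (X x) (X x)"
  have cross: "rinner (X y) x = rinner (X x) y" using X_self_adjoint[OF y x] inner_commute[OF y Xx] by simp
  have plus: "rinner (X (x + y)) (x + y) = rinner (X x) x + 2 * rinner (X x) y + rinner (X y) y"
    using x y Xx Xy cross by (simp add: X_add inner_simps)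
  have minus: "rinner (X (x - y)) (x - y) = rinner (X x) x - 2 * rinner (X x) y + rinner (X y) y"
    using x y Xx Xy cross by (simp add: X_diff inner_simps)
  have parallelogram: "rinner (x + y) (x + y) + rinner (x - y) (x - y) = 2 * a + 2 * rinner y y"
    using x y unfolding a_def by (simp add: inner_simps inner_commute[of y x])
  have "4 * rinner (X x) y \<le> h * (rinner (x + y) (x + y) + rinner (x - y) (x - y))"
    using X_range[of "x + y"] X_range[of "x - y"] x y plus minus
    by (simp add: abs_le_iff distrib_left)
  also have "\<dots> = 2 * h * a + 2 * h * rinner y y"
    unfolding parallelogram by (simp add: algebra_simps)
  finally have "4 * rinner (X x) y \<le> 2 * h * a + 2 * h * rinner y y" .
  moreover have "rinner (X x) y = e / h" and "h * rinner y y = e / h"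
    unfolding y_def e_def using Xx h by (simp_all add: inner_simps power2_eq_square)
  ultimately have "e / h \<le> h * a" by simp
  thus ?thesis using h unfolding e_def a_def by (simp add: power2_eq_square field_simps)
qed

lemma gram_carrier: "G \<in> carrier_mat k k"
  unfolding gram_reg_def using W by auto

lemma gram_mult_vec: "y \<in> carrier_vec k \<Longrightarrow>
   G *\<^sub>v y = transpose_mat W *\<^sub>v (W *\<^sub>v y) + c \<cdot>\<^sub>v y"
  unfolding gram_reg_def using W
  by (simp add: add_mult_distrib_mat_vec[of _ k k] smult_mat_mult_vec[of _ k k])

lemma scalar_prod_gram: assumes x: "x \<in> carrier_vec k" and y: "y \<in> carrier_vec k"
  shows "x \<bullet> (G *\<^sub>v y) = rinner x y"
proof -
  have "x \<bullet> (transpose_mat W *\<^sub>v (W *\<^sub>v y)) = (W *\<^sub>v y) \<bullet> (W *\<^sub>v x)"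
    using W x y by (subst comm_scalar_prod[of _ k]) (auto intro: transpose_vec_mult_scalar)
  thus ?thesis
    unfolding gram_mult_vec[OF y] reg_inner_def using W x y
    by (simp add: scalar_prod_add_distrib[of _ k] comm_scalar_prod[of _ m])
qed

lemma qform_gram: "x \<in> carrier_vec k \<Longrightarrow> qform G x = rinner x x"
  unfolding qform_def by (rule scalar_prod_gram)

lemma gram_inverse: "G * Ginv = 1\<^sub>m k \<and> Ginv * G = 1\<^sub>m k \<and> Ginv \<in> carrier_mat k k"
proof -
  have "det G \<noteq> 0"
  proof
    assume "det G = 0"
    then obtain v where v: "v \<in> carrier_vec k" "v \<noteq> 0\<^sub>v k" "G *\<^sub>v v = 0\<^sub>v k"
      using det_0_iff_vec_prod_zero[OF gram_carrier] by auto
    have "rinner v v = 0" using scalar_prod_gram[OF v(1) v(1)] v by simp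
    hence "v \<bullet> v = 0"
      using inner_self_ge_scalar_prod[of v] scalar_prod_self_nonneg[of v] c_pos
      by (simp add: mult_le_0_iff)
    thus False using scalar_prod_self_eq_0[of v k] v by simp
  qed
  hence "G \<in> Units (ring_mat TYPE(real) k undefined)"
    by (rule det_non_zero_imp_unit[OF gram_carrier])
  then obtain X where "mat_inverse G = Some X"
    using mat_inverse(1)[OF gram_carrier, of undefined] by (cases "mat_inverse G") auto
  thus ?thesis unfolding mat_inv_def using mat_inverse(2)[OF gram_carrier] by simp
qed

lemma gram_inv_carrier: "Ginv \<in> carrier_mat k k"
  using gram_inverse by simp

lemma gram_inv_mult_vec_carrier [simp]: "x \<in> carrier_vec k \<Longrightarrow> Ginv *\<^sub>v x \<in> carrier_vec k"
  using gram_inv_carrier by simp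

lemma gram_inv_left: "x \<in> carrier_vec k \<Longrightarrow> Ginv *\<^sub>v (G *\<^sub>v x) = x"
  using gram_inverse gram_carrier
  by (simp flip: assoc_mult_mat_vec[of Ginv k k G k x])

lemma gram_inv_right: "x \<in> carrier_vec k \<Longrightarrow> G *\<^sub>v (Ginv *\<^sub>v x) = x"
  using gram_inverse gram_carrier
  by (simp flip: assoc_mult_mat_vec[of G k k Ginv k x])

lemma scalar_prod_gram_inv_self: assumes x: "x \<in> carrier_vec k"
  shows "x \<bullet> (Ginv *\<^sub>v x) = rinner (Ginv *\<^sub>v x) (Ginv *\<^sub>v x)"
  using scalar_prod_gram[of "Ginv *\<^sub>v x" "Ginv *\<^sub>v x"] x
  by (simp add: gram_inv_right comm_scalar_prod[of x k])

lemma scalar_prod_gram_inv_commute: assumes x: "x \<in> carrier_vec k" and y: "y \<in> carrier_vec k"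
  shows "x \<bullet> (Ginv *\<^sub>v y) = y \<bullet> (Ginv *\<^sub>v x)"
  using scalar_prod_gram[of "Ginv *\<^sub>v x" "Ginv *\<^sub>v y"]
    scalar_prod_gram[of "Ginv *\<^sub>v y" "Ginv *\<^sub>v x"]
    inner_commute[of "Ginv *\<^sub>v x" "Ginv *\<^sub>v y"] x y
  by (simp add: gram_inv_right comm_scalar_prod[of _ k])

end

section \<open>Spectral norm\<close>

lemma scalar_prod_Cauchy_Schwarz: assumes "(x::real vec) \<in> carrier_vec k" and "y \<in> carrier_vec k"
  shows "(x \<bullet> y)\<^sup>2 \<le> (x \<bullet> x) * (y \<bullet> y)"
proof -
  interpret E: reg_form "0\<^sub>m 0 k" 0 k 1 by unfold_locales auto
  have "reg_inner (0\<^sub>m 0 k) 1 u v = u \<bullet> v" for u v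
    unfolding reg_inner_def by (simp add: scalar_prod_def)
  thus ?thesis using E.Cauchy_Schwarz[OF assms] by simp
qed

lemma mult_vec_bound_transpose:
  assumes W: "(W::real mat) \<in> carrier_mat m k" and g: "0 \<le> g"
    and bound: "\<And>v. v \<in> carrier_vec k \<Longrightarrow> (W *\<^sub>v v) \<bullet> (W *\<^sub>v v) \<le> g * (v \<bullet> v)"
    and w: "w \<in> carrier_vec m"
  shows "(transpose_mat W *\<^sub>v w) \<bullet> (transpose_mat W *\<^sub>v w) \<le> g * (w \<bullet> w)"
proof -
  define u where "u = transpose_mat W *\<^sub>v w"
  have u: "u \<in> carrier_vec k" unfolding u_def using W w by simp
  have "u \<bullet> u = w \<bullet> (W *\<^sub>v u)" unfolding u_def using W w u[unfolded u_def]
    by (intro transpose_vec_mult_scalar) auto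
  hence "(u \<bullet> u)\<^sup>2 \<le> (w \<bullet> w) * ((W *\<^sub>v u) \<bullet> (W *\<^sub>v u))"
    using scalar_prod_Cauchy_Schwarz[OF w, of "W *\<^sub>v u"] W u by simp
  also have "\<dots> \<le> (w \<bullet> w) * (g * (u \<bullet> u))"
    using bound[OF u] scalar_prod_self_nonneg[of w] by (rule mult_left_mono)
  finally have "(u \<bullet> u) * (u \<bullet> u) \<le> (g * (w \<bullet> w)) * (u \<bullet> u)"
    by (simp add: power2_eq_square algebra_simps)
  thus ?thesis
    using g scalar_prod_self_nonneg[of w] scalar_prod_self_nonneg[of u]
    unfolding u_def[symmetric] by (cases "u \<bullet> u = 0") auto
qed

lemma vnorm_square: "(vnorm v)\<^sup>2 = v \<bullet> v"
  unfolding vnorm_def using scalar_prod_self_nonneg[of v] by simp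

lemma mult_vec_le_Frobenius: assumes M: "(M::real mat) \<in> carrier_mat m k" and v: "v \<in> carrier_vec k"
  shows "(M *\<^sub>v v) \<bullet> (M *\<^sub>v v) \<le> (\<Sum>i<m. row M i \<bullet> row M i) * (v \<bullet> v)"
proof -
  have "(M *\<^sub>v v) \<bullet> (M *\<^sub>v v) = (\<Sum>i<m. (row M i \<bullet> v)\<^sup>2)"
    using M unfolding scalar_prod_def[of "M *\<^sub>v v"] by (simp add: power2_eq_square atLeast0LessThan)
  also have "\<dots> \<le> (\<Sum>i<m. (row M i \<bullet> row M i) * (v \<bullet> v))"
    using M v by (intro sum_mono scalar_prod_Cauchy_Schwarz[of _ k]) auto
  finally show ?thesis by (simp add: sum_distrib_right)
qed

lemma vnorm_mult_vec_le_spec_norm: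
  assumes M: "(M::real mat) \<in> carrier_mat m k" and u: "u \<in> carrier_vec k" and "vnorm u = 1"
  shows "vnorm (M *\<^sub>v u) \<le> spec_norm M"
  unfolding spec_norm_def
proof (rule cSup_upper)
  show "vnorm (M *\<^sub>v u) \<in> {0} \<union> {vnorm (M *\<^sub>v v) |v. dim_vec v = dim_col M \<and> vnorm v = 1}"
    using assms by auto
  define F where "F = (\<Sum>i<m. row M i \<bullet> row M i)"
  show "bdd_above ({0} \<union> {vnorm (M *\<^sub>v v) |v. dim_vec v = dim_col M \<and> vnorm v = 1})"
  proof (rule bdd_aboveI[of _ "sqrt F"], elim UnE)
    fix x assume "x \<in> {0::real}"
    thus "x \<le> sqrt F" unfolding F_def by (simp add: sum_nonneg scalar_prod_self_nonneg)
  next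
    fix x assume "x \<in> {vnorm (M *\<^sub>v v) |v. dim_vec v = dim_col M \<and> vnorm v = 1}"
    then obtain w where "x = vnorm (M *\<^sub>v w)" "dim_vec w = k" "vnorm w = 1" using M by auto
    moreover have "w \<bullet> w = 1" using \<open>vnorm w = 1\<close> vnorm_square[of w] by simp
    ultimately show "x \<le> sqrt F"
      using mult_vec_le_Frobenius[OF M, of w] unfolding F_def vnorm_def by auto
  qed
qed

lemma mult_vec_le_spec_norm: assumes M: "(M::real mat) \<in> carrier_mat m k" and v: "v \<in> carrier_vec k"
  shows "(M *\<^sub>v v) \<bullet> (M *\<^sub>v v) \<le> (spec_norm M)\<^sup>2 * (v \<bullet> v)"
proof (cases "v \<bullet> v = 0")
  case True
  hence "v = 0\<^sub>v k" by (rule scalar_prod_self_eq_0[OF _ v])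
  hence "M *\<^sub>v v = 0\<^sub>v m" using M by (intro eq_vecI) (auto simp: scalar_prod_def)
  thus ?thesis using True by simp
next
  case False
  hence v_pos: "0 < v \<bullet> v" using scalar_prod_self_nonneg[of v] by simp
  define l where "l = vnorm v"
  have l: "0 < l" unfolding l_def vnorm_def using v_pos by simp
  define u where "u = (1 / l) \<cdot>\<^sub>v v"
  have "vnorm u = 1" unfolding u_def vnorm_def using v l
    by (simp add: vnorm_square[of v, folded l_def, symmetric] power2_eq_square)
  hence "vnorm (M *\<^sub>v u) \<le> spec_norm M"
    using vnorm_mult_vec_le_spec_norm[OF M] v unfolding u_def by simp
  hence "(vnorm (M *\<^sub>v u))\<^sup>2 \<le> (spec_norm M)\<^sup>2"
    by (rule power_mono) (simp add: vnorm_def scalar_prod_self_nonneg)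
  moreover have "(vnorm (M *\<^sub>v u))\<^sup>2 = ((M *\<^sub>v v) \<bullet> (M *\<^sub>v v)) / l\<^sup>2"
    unfolding vnorm_square u_def mult_mat_vec[OF M v] using M v by (simp add: power2_eq_square)
  ultimately show ?thesis using v_pos by (simp add: l_def vnorm_square divide_le_eq mult.commute)
qed

section \<open>The exactly preconditioned operator\<close>

locale precond_setting =
  fixes n d s :: nat and A B :: "real mat" and \<nu> :: real
  assumes A: "A \<in> carrier_mat n d" and B: "B \<in> carrier_mat n s" and nu_pos: "0 < \<nu>"
    and approx: "spectral_approx 4 (A * transpose_mat A + \<nu> \<cdot>\<^sub>m 1\<^sub>m n) (B * transpose_mat B + \<nu> \<cdot>\<^sub>m 1\<^sub>m n)"
begin

abbreviation "At \<equiv> transpose_mat A"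
abbreviation "Bt \<equiv> transpose_mat B"

lemma dims [simp]: "dim_row A = n" "dim_col A = d" "dim_row B = n" "dim_col B = s"
  using A B by auto

lemma mult_vec_carrier [simp]:
  "v \<in> carrier_vec d \<Longrightarrow> A *\<^sub>v v \<in> carrier_vec n" "w \<in> carrier_vec n \<Longrightarrow> At *\<^sub>v w \<in> carrier_vec d"
  "u \<in> carrier_vec s \<Longrightarrow> B *\<^sub>v u \<in> carrier_vec n" "w \<in> carrier_vec n \<Longrightarrow> Bt *\<^sub>v w \<in> carrier_vec s"
  using A B by auto

text \<open>\<open>M\<close> and \<open>N\<close> are the systems solved by \<open>f\<close> and to be solved; \<open>P\<close> and \<open>Q\<close> are the \<open>n \<times> n\<close>
  matrices \<open>A A\<^sup>T + \<nu> I\<close> and \<open>B B\<^sup>T + \<nu> I\<close> related by the spectral approximation.\<close>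
sublocale M: reg_form A n d \<nu> using A nu_pos by unfold_locales
sublocale N: reg_form B n s \<nu> using B nu_pos by unfold_locales
sublocale P: reg_form At d n \<nu> using A nu_pos by unfold_locales auto
sublocale Q: reg_form Bt s n \<nu> using B nu_pos by unfold_locales auto

lemma approx_inner:
  assumes x: "x \<in> carrier_vec n"
  shows "Q.rinner x x \<le> 4 * P.rinner x x" and "P.rinner x x \<le> 4 * Q.rinner x x"
proof -
  have eqP: "A * At + \<nu> \<cdot>\<^sub>m 1\<^sub>m n = P.G" and eqQ: "B * Bt + \<nu> \<cdot>\<^sub>m 1\<^sub>m n = Q.G"
    unfolding gram_reg_def by simp_all
  from approx have lower: "loewner_le ((1/4) \<cdot>\<^sub>m Q.G) P.G" and upper: "loewner_le P.G (4 \<cdot>\<^sub>m Q.G)"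
    unfolding spectral_approx_def eqP eqQ by simp_all
  have "dim_vec x = dim_row ((1/4) \<cdot>\<^sub>m Q.G)" and "dim_vec x = dim_row P.G"
    using x Q.gram_carrier P.gram_carrier by auto
  with lower upper have "qform ((1/4) \<cdot>\<^sub>m Q.G) x \<le> qform P.G x" and "qform P.G x \<le> qform (4 \<cdot>\<^sub>m Q.G) x"
    unfolding loewner_le_def by blast+
  moreover have "qform (a \<cdot>\<^sub>m Q.G) x = a * Q.rinner x x" for a
    unfolding qform_def using x Q.gram_carrier Q.scalar_prod_gram[OF x x] by (simp add: smult_mat_mult_vec)
  ultimately show "Q.rinner x x \<le> 4 * P.rinner x x" "P.rinner x x \<le> 4 * Q.rinner x x"
    using P.qform_gram[OF x] by simp_all
qed

definition "\<alpha> = (spec_norm A)\<^sup>2"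
definition "\<kappa> = 1 + \<alpha> / \<nu>"
definition "\<beta> = 4 * \<alpha> + 3 * \<nu>"

lemma alpha_nonneg: "0 \<le> \<alpha>"
  unfolding \<alpha>_def by simp

lemma beta_nonneg: "0 \<le> \<beta>"
  unfolding \<beta>_def using alpha_nonneg nu_pos by simp

lemma kappa_ge_1: "1 \<le> \<kappa>"
  unfolding \<kappa>_def using alpha_nonneg nu_pos by simp

lemma A_bound: "v \<in> carrier_vec d \<Longrightarrow> (A *\<^sub>v v) \<bullet> (A *\<^sub>v v) \<le> \<alpha> * (v \<bullet> v)"
  unfolding \<alpha>_def by (rule mult_vec_le_spec_norm[OF A])

lemma At_bound: "w \<in> carrier_vec n \<Longrightarrow> (At *\<^sub>v w) \<bullet> (At *\<^sub>v w) \<le> \<alpha> * (w \<bullet> w)"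
  by (rule mult_vec_bound_transpose[OF A alpha_nonneg A_bound])

text \<open>The constant \<open>\<beta> = 4 \<alpha> + 3 \<nu>\<close> comes from \<open>B B\<^sup>T + \<nu> I \<preceq> 4 (A A\<^sup>T + \<nu> I)\<close>.\<close>
lemma Bt_bound: "w \<in> carrier_vec n \<Longrightarrow> (Bt *\<^sub>v w) \<bullet> (Bt *\<^sub>v w) \<le> \<beta> * (w \<bullet> w)"
  using approx_inner(1)[of w] At_bound[of w] unfolding reg_inner_def \<beta>_def
  by (simp add: algebra_simps)

lemma B_bound: "v \<in> carrier_vec s \<Longrightarrow> (B *\<^sub>v v) \<bullet> (B *\<^sub>v v) \<le> \<beta> * (v \<bullet> v)"
  using mult_vec_bound_transpose[OF _ beta_nonneg Bt_bound, of s] B by simp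

definition precond :: "real vec \<Rightarrow> real vec" where
  "precond w = P.Ginv *\<^sub>v (Q.G *\<^sub>v w)"

lemma precond_carrier [simp]: "w \<in> carrier_vec n \<Longrightarrow> precond w \<in> carrier_vec n"
  unfolding precond_def using Q.gram_carrier by simp

lemma precond_dim [simp]: "w \<in> carrier_vec n \<Longrightarrow> dim_vec (precond w) = n"
  using precond_carrier carrier_vecD by blast

lemma precond_add: "x \<in> carrier_vec n \<Longrightarrow> y \<in> carrier_vec n \<Longrightarrow> precond (x + y) = precond x + precond y"
  unfolding precond_def using Q.gram_carrier P.gram_inv_carrier
  by (simp add: mult_add_distrib_mat_vec[of _ n n])

lemma precond_diff: "x \<in> carrier_vec n \<Longrightarrow> y \<in> carrier_vec n \<Longrightarrow> precond (x - y) = precond x - precond y"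
  unfolding precond_def using Q.gram_carrier P.gram_inv_carrier
  by (simp add: mult_minus_distrib_mat_vec[of _ n n])

lemma precond_self_adjoint: assumes x: "x \<in> carrier_vec n" and y: "y \<in> carrier_vec n"
  shows "Q.rinner (precond x) y = Q.rinner x (precond y)"
proof -
  have Qx: "Q.G *\<^sub>v x \<in> carrier_vec n" and Qy: "Q.G *\<^sub>v y \<in> carrier_vec n"
    using x y Q.gram_carrier by auto
  have "Q.rinner (precond x) y = (Q.G *\<^sub>v y) \<bullet> (P.Ginv *\<^sub>v (Q.G *\<^sub>v x))"
    unfolding precond_def using x y Qx Qy
    by (simp add: Q.scalar_prod_gram[symmetric] comm_scalar_prod[of _ n])
  also have "\<dots> = (Q.G *\<^sub>v x) \<bullet> (P.Ginv *\<^sub>v (Q.G *\<^sub>v y))"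
    by (rule P.scalar_prod_gram_inv_commute[OF Qy Qx])
  also have "\<dots> = Q.rinner (precond y) x"
    unfolding precond_def using x y Qx Qy
    by (simp add: Q.scalar_prod_gram[symmetric] comm_scalar_prod[of _ n])
  finally show ?thesis using x y by (simp add: Q.inner_commute[of x])
qed

lemma precond_range: assumes z: "z \<in> carrier_vec n"
  shows "(1/4) * Q.rinner z z \<le> Q.rinner (precond z) z" and "Q.rinner (precond z) z \<le> 4 * Q.rinner z z"
proof -
  define g where "g = precond z"
  have g: "g \<in> carrier_vec n" unfolding g_def using z by simp
  have Pg: "P.G *\<^sub>v g = Q.G *\<^sub>v z"
    unfolding g_def precond_def using z Q.gram_carrier by (simp add: P.gram_inv_right)
  have gz: "Q.rinner g z = P.rinner g g"
    using g z Q.scalar_prod_gram[OF g z] P.scalar_prod_gram[OF g g] Pg by simp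
  have zg: "P.rinner g z = Q.rinner z z"
    using g z Q.scalar_prod_gram[OF z z] P.scalar_prod_gram[OF z g] Pg P.inner_commute[OF g z] by simp
  have "(Q.rinner g z)\<^sup>2 \<le> Q.rinner g g * Q.rinner z z" by (rule Q.Cauchy_Schwarz[OF g z])
  also have "\<dots> \<le> (4 * P.rinner g g) * Q.rinner z z"
    using approx_inner(1)[OF g] Q.inner_self_nonneg by (rule mult_right_mono)
  finally have "P.rinner g g * P.rinner g g \<le> (4 * Q.rinner z z) * P.rinner g g"
    unfolding gz by (simp add: power2_eq_square algebra_simps)
  hence upper: "P.rinner g g \<le> 4 * Q.rinner z z"
    using P.inner_self_nonneg[of g] Q.inner_self_nonneg[of z] by (cases "P.rinner g g = 0") auto
  have "0 \<le> P.rinner (g - (1/4) \<cdot>\<^sub>v z) (g - (1/4) \<cdot>\<^sub>v z)" by (rule P.inner_self_nonneg)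
  also have "\<dots> = P.rinner g g - (1/2) * P.rinner g z + (1/16) * P.rinner z z"
    using g z by (simp add: P.inner_simps P.inner_commute[of z g] field_simps)
  finally have "(1/4) * Q.rinner z z \<le> P.rinner g g"
    using approx_inner(2)[OF z] unfolding zg by simp
  with upper show "(1/4) * Q.rinner z z \<le> Q.rinner (precond z) z" "Q.rinner (precond z) z \<le> 4 * Q.rinner z z"
    unfolding g_def[symmetric] gz by simp_all
qed

lemma precond_bound: assumes z: "z \<in> carrier_vec n"
  shows "Q.rinner (precond z) (precond z) \<le> 4\<^sup>2 * Q.rinner z z"
proof (rule Q.self_adjoint_norm_bound[where X = precond])
  fix x :: "real vec" assume x: "x \<in> carrier_vec n"
  show "\<bar>Q.rinner (precond x) x\<bar> \<le> 4 * Q.rinner x x"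
    using precond_range[OF x] Q.inner_self_nonneg[of x] by (simp add: abs_le_iff)
qed (use z precond_add precond_diff precond_self_adjoint in auto)

lemma precond_shift_bound: assumes z: "z \<in> carrier_vec n"
  shows "Q.rinner (precond z - (17/8) \<cdot>\<^sub>v z) (precond z - (17/8) \<cdot>\<^sub>v z) \<le> (15/8)\<^sup>2 * Q.rinner z z"
proof (rule Q.self_adjoint_norm_bound[where X = "\<lambda>z. precond z - (17/8) \<cdot>\<^sub>v z"])
  fix x :: "real vec" assume x: "x \<in> carrier_vec n"
  have "Q.rinner (precond x - (17/8) \<cdot>\<^sub>v x) x = Q.rinner (precond x) x - (17/8) * Q.rinner x x"
    using x by (simp add: Q.inner_simps)
  thus "\<bar>Q.rinner (precond x - (17/8) \<cdot>\<^sub>v x) x\<bar> \<le> 15/8 * Q.rinner x x"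
    using precond_range[OF x] Q.inner_self_nonneg[of x] unfolding abs_le_iff by linarith
next
  fix x y :: "real vec" assume x: "x \<in> carrier_vec n" and y: "y \<in> carrier_vec n"
  show "precond (x + y) - (17/8) \<cdot>\<^sub>v (x + y) = (precond x - (17/8) \<cdot>\<^sub>v x) + (precond y - (17/8) \<cdot>\<^sub>v y)"
    using x y by (intro eq_vecI) (auto simp: precond_add algebra_simps)
  show "precond (x - y) - (17/8) \<cdot>\<^sub>v (x - y) = (precond x - (17/8) \<cdot>\<^sub>v x) - (precond y - (17/8) \<cdot>\<^sub>v y)"
    using x y by (intro eq_vecI) (auto simp: precond_diff field_simps)
  show "Q.rinner (precond x - (17/8) \<cdot>\<^sub>v x) y = Q.rinner x (precond y - (17/8) \<cdot>\<^sub>v y)"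
    using x y by (simp add: Q.inner_simps precond_self_adjoint Q.inner_commute[of x y])
qed (use z in auto)

text \<open>The residual polynomial \<open>1 - (544/353) t + (128/353) t\<^sup>2 = (128/353) (t - 17/8)\<^sup>2 - 225/353\<close>
  is the degree-2 Chebyshev polynomial of \<open>[1/4, 4]\<close>, bounded there by \<open>225/353\<close>.\<close>
definition cheb_residual :: "real vec \<Rightarrow> real vec" where
  "cheb_residual z = z - (544/353) \<cdot>\<^sub>v precond z + (128/353) \<cdot>\<^sub>v precond (precond z)"

lemma cheb_residual_carrier [simp]: "z \<in> carrier_vec n \<Longrightarrow> cheb_residual z \<in> carrier_vec n"
  unfolding cheb_residual_def by simp

lemma cheb_residual_bound: assumes z: "z \<in> carrier_vec n"
  shows "Q.rinner (cheb_residual z) (cheb_residual z) \<le> (225/353)\<^sup>2 * Q.rinner z z"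
proof (rule Q.self_adjoint_norm_bound[where X = cheb_residual])
  fix x :: "real vec" assume x: "x \<in> carrier_vec n"
  define X where "X = precond x - (17/8) \<cdot>\<^sub>v x"
  have px: "precond x \<in> carrier_vec n" using x by simp
  have px_self_adjoint: "Q.rinner (precond (precond x)) x = Q.rinner (precond x) (precond x)"
    using precond_self_adjoint[OF px x] by simp
  have XX: "Q.rinner X X = Q.rinner (precond x) (precond x) - (17/4) * Q.rinner (precond x) x
      + (289/64) * Q.rinner x x"
    unfolding X_def using x px Q.inner_commute[OF x px] by (simp add: Q.inner_simps field_simps)
  have "Q.rinner (cheb_residual x) x = - (225/353) * Q.rinner x x + (128/353) * Q.rinner X X"
    unfolding cheb_residual_def XX using x px by (simp add: Q.inner_simps px_self_adjoint field_simps)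
  moreover have "0 \<le> Q.rinner X X" "Q.rinner X X \<le> (225/64) * Q.rinner x x"
    unfolding X_def using Q.inner_self_nonneg precond_shift_bound[OF x] by (auto simp: power2_eq_square)
  ultimately show "\<bar>Q.rinner (cheb_residual x) x\<bar> \<le> 225/353 * Q.rinner x x"
    using Q.inner_self_nonneg[of x] unfolding abs_le_iff by linarith
next
  fix x y :: "real vec" assume x: "x \<in> carrier_vec n" and y: "y \<in> carrier_vec n"
  show "cheb_residual (x + y) = cheb_residual x + cheb_residual y"
    unfolding cheb_residual_def using x y by (intro eq_vecI) (auto simp: precond_add algebra_simps)
  show "cheb_residual (x - y) = cheb_residual x - cheb_residual y"
    unfolding cheb_residual_def using x y by (intro eq_vecI) (auto simp: precond_diff field_simps)
  show "Q.rinner (cheb_residual x) y = Q.rinner x (cheb_residual y)"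
    unfolding cheb_residual_def using x y
    by (simp add: Q.inner_simps precond_self_adjoint Q.inner_commute[of x y])
qed (use z in auto)

lemma precond_norm_le: "z \<in> carrier_vec n \<Longrightarrow> Q.rnorm (precond z) \<le> 4 * Q.rnorm z"
  using Q.norm_le_iff[of 4] precond_bound by simp

lemma cheb_residual_norm_le: "z \<in> carrier_vec n \<Longrightarrow> Q.rnorm (cheb_residual z) \<le> (225/353) * Q.rnorm z"
  using Q.norm_le_iff[of "225/353"] cheb_residual_bound by simp

lemma Pinv_Woodbury: assumes r: "r \<in> carrier_vec n"
  shows "P.Ginv *\<^sub>v r = (1/\<nu>) \<cdot>\<^sub>v (r - A *\<^sub>v (M.Ginv *\<^sub>v (At *\<^sub>v r)))"
proof -
  define g where "g = M.Ginv *\<^sub>v (At *\<^sub>v r)"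
  have g: "g \<in> carrier_vec d" unfolding g_def using r by simp
  have Mg: "At *\<^sub>v (A *\<^sub>v g) + \<nu> \<cdot>\<^sub>v g = At *\<^sub>v r"
    unfolding g_def using r M.gram_inv_right[of "At *\<^sub>v r"] M.gram_mult_vec[of g] g g_def by simp
  define y where "y = (1/\<nu>) \<cdot>\<^sub>v (r - A *\<^sub>v g)"
  have y: "y \<in> carrier_vec n" unfolding y_def using r g by simp
  have "At *\<^sub>v y = (1/\<nu>) \<cdot>\<^sub>v (At *\<^sub>v r - At *\<^sub>v (A *\<^sub>v g))"
    unfolding y_def using r g by (simp add: mult_mat_vec[OF P.W] mult_minus_distrib_mat_vec[OF P.W])
  also have "\<dots> = g" unfolding Mg[symmetric] using g nu_pos by (intro eq_vecI) auto
  finally have "P.G *\<^sub>v y = r"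
    using y r g nu_pos unfolding P.gram_mult_vec[OF y] by (intro eq_vecI) (auto simp: y_def)
  hence "P.Ginv *\<^sub>v r = y" using P.gram_inv_left[OF y] by simp
  thus ?thesis unfolding y_def g_def .
qed

end

section \<open>The approximate preconditioner\<close>

locale solver_setting = precond_setting +
  fixes f :: "real vec \<Rightarrow> real vec"
  assumes f_solver: "eps_solver (transpose_mat A * A + \<nu> \<cdot>\<^sub>m 1\<^sub>m d) (1 / (160 * \<kappa>\<^sup>2)) f"
begin

abbreviation "\<delta> \<equiv> 1 / (160 * \<kappa>\<^sup>2)"

lemma f_solution: assumes u: "u \<in> carrier_vec d"
  shows "f u \<in> carrier_vec d"
    and "M.rinner (f u - M.Ginv *\<^sub>v u) (f u - M.Ginv *\<^sub>v u) \<le> \<delta> * (u \<bullet> (M.Ginv *\<^sub>v u))"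
proof -
  have "transpose_mat A * A + \<nu> \<cdot>\<^sub>m 1\<^sub>m d = M.G" unfolding gram_reg_def by simp
  with f_solver u M.gram_carrier
  have "dim_vec (f u) = d" and err: "qform M.G (f u - M.Ginv *\<^sub>v u) \<le> \<delta> * qform M.Ginv u"
    unfolding eps_solver_def eps_solution_def by auto
  thus fu: "f u \<in> carrier_vec d" by auto
  show "M.rinner (f u - M.Ginv *\<^sub>v u) (f u - M.Ginv *\<^sub>v u) \<le> \<delta> * (u \<bullet> (M.Ginv *\<^sub>v u))"
    using err M.qform_gram[of "f u - M.Ginv *\<^sub>v u"] fu u unfolding qform_def by simp
qed

lemma f_dim [simp]: "u \<in> carrier_vec d \<Longrightarrow> dim_vec (f u) = d"
  using f_solution(1) by auto

text \<open>One step of iterative refinement squares the relative error of \<open>f\<close>.\<close>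
definition refined_solve :: "real vec \<Rightarrow> real vec" where
  "refined_solve u = f u + f (u - M.G *\<^sub>v f u)"

lemma refined_solve_carrier [simp]: "u \<in> carrier_vec d \<Longrightarrow> refined_solve u \<in> carrier_vec d"
  unfolding refined_solve_def using f_solution(1) M.gram_carrier by simp

lemma refined_solve_error: assumes u: "u \<in> carrier_vec d"
  shows "M.rinner (refined_solve u - M.Ginv *\<^sub>v u) (refined_solve u - M.Ginv *\<^sub>v u)
    \<le> \<delta>\<^sup>2 * (u \<bullet> (M.Ginv *\<^sub>v u))"
proof -
  define x where "x = f u"
  define u' where "u' = u - M.G *\<^sub>v x"
  have x: "x \<in> carrier_vec d" unfolding x_def using f_solution(1)[OF u] .
  have u': "u' \<in> carrier_vec d" unfolding u'_def using u x M.gram_carrier by simp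
  have Minv_u': "M.Ginv *\<^sub>v u' = M.Ginv *\<^sub>v u - x"
    unfolding u'_def using u x M.gram_carrier M.gram_inv_carrier
    by (simp add: mult_minus_distrib_mat_vec[of _ d d] M.gram_inv_left)
  have "refined_solve u - M.Ginv *\<^sub>v u = f u' - M.Ginv *\<^sub>v u'"
    unfolding refined_solve_def Minv_u' x_def[symmetric] u'_def[symmetric]
    using u x f_solution(1)[OF u'] M.gram_inv_carrier by (intro eq_vecI) auto
  hence "M.rinner (refined_solve u - M.Ginv *\<^sub>v u) (refined_solve u - M.Ginv *\<^sub>v u)
      \<le> \<delta> * (u' \<bullet> (M.Ginv *\<^sub>v u'))"
    using f_solution(2)[OF u'] by simp
  also have "u' \<bullet> (M.Ginv *\<^sub>v u') = M.rinner (x - M.Ginv *\<^sub>v u) (x - M.Ginv *\<^sub>v u)"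
    using M.scalar_prod_gram_inv_self[OF u'] unfolding Minv_u'
    using u x by (simp add: M.inner_self_diff_commute)
  also have "\<delta> * \<dots> \<le> \<delta> * (\<delta> * (u \<bullet> (M.Ginv *\<^sub>v u)))"
    unfolding x_def by (rule mult_left_mono[OF f_solution(2)[OF u]]) simp
  finally show ?thesis by (simp add: power2_eq_square mult.assoc)
qed

text \<open>By the Woodbury identity this approximates \<open>P\<^sup>-\<^sup>1 r\<close>, using two calls of \<open>f\<close>.\<close>
definition approx_Pinv :: "real vec \<Rightarrow> real vec" where
  "approx_Pinv r = (1/\<nu>) \<cdot>\<^sub>v (r - A *\<^sub>v refined_solve (At *\<^sub>v r))"

lemma approx_Pinv_carrier [simp]: "r \<in> carrier_vec n \<Longrightarrow> approx_Pinv r \<in> carrier_vec n"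
  unfolding approx_Pinv_def by simp

lemma approx_Pinv_dim [simp]: "r \<in> carrier_vec n \<Longrightarrow> dim_vec (approx_Pinv r) = n"
  using approx_Pinv_carrier carrier_vecD by blast

lemma scalar_prod_Minv_At_le: assumes r: "r \<in> carrier_vec n"
  shows "(At *\<^sub>v r) \<bullet> (M.Ginv *\<^sub>v (At *\<^sub>v r)) \<le> r \<bullet> r"
proof -
  define g where "g = M.Ginv *\<^sub>v (At *\<^sub>v r)"
  have g: "g \<in> carrier_vec d" unfolding g_def using r by simp
  define X where "X = (At *\<^sub>v r) \<bullet> g"
  have X: "X = M.rinner g g" unfolding X_def g_def using r by (simp add: M.scalar_prod_gram_inv_self)
  have "X = r \<bullet> (A *\<^sub>v g)" unfolding X_def using r g by (intro transpose_vec_mult_scalar[OF A])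
  hence "X\<^sup>2 \<le> (r \<bullet> r) * ((A *\<^sub>v g) \<bullet> (A *\<^sub>v g))"
    using scalar_prod_Cauchy_Schwarz[OF r, of "A *\<^sub>v g"] g by simp
  also have "\<dots> \<le> (r \<bullet> r) * X"
    unfolding X using M.inner_self_ge_image[of g] scalar_prod_self_nonneg[of r] by (rule mult_left_mono)
  finally have "X * X \<le> (r \<bullet> r) * X" by (simp add: power2_eq_square)
  hence "X \<le> r \<bullet> r"
    using M.inner_self_nonneg[of g] scalar_prod_self_nonneg[of r] unfolding X[symmetric]
    by (cases "X = 0") auto
  thus ?thesis unfolding X_def g_def .
qed

lemma scalar_prod_gram_Q_le: assumes w: "w \<in> carrier_vec n"
  shows "(Q.G *\<^sub>v w) \<bullet> (Q.G *\<^sub>v w) \<le> (\<beta> + \<nu>) * Q.rinner w w"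
proof -
  define p where "p = Bt *\<^sub>v w"
  have p: "p \<in> carrier_vec s" unfolding p_def using w by simp
  have Bp: "B *\<^sub>v p \<in> carrier_vec n" using p by simp
  have cross: "w \<bullet> (B *\<^sub>v p) = p \<bullet> p" and cross': "(B *\<^sub>v p) \<bullet> w = p \<bullet> p"
    using transpose_vec_mult_scalar[OF Q.W w p] comm_scalar_prod[OF w Bp] unfolding p_def by simp_all
  have "(Q.G *\<^sub>v w) \<bullet> (Q.G *\<^sub>v w) = (B *\<^sub>v p) \<bullet> (B *\<^sub>v p) + 2 * \<nu> * (p \<bullet> p) + \<nu> * \<nu> * (w \<bullet> w)"
    unfolding Q.gram_mult_vec[OF w] p_def[symmetric] using Bp w cross cross'
    by (simp add: add_scalar_prod_distrib[of _ n] scalar_prod_add_distrib[of _ n] algebra_simps)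
  moreover have "Q.rinner w w = p \<bullet> p + \<nu> * (w \<bullet> w)" unfolding reg_inner_def p_def by simp
  moreover have "\<nu> * (p \<bullet> p) \<le> \<nu> * (\<beta> * (w \<bullet> w))"
    using Bt_bound[OF w] nu_pos unfolding p_def by simp
  ultimately show ?thesis using B_bound[OF p] by (simp add: algebra_simps)
qed

lemma P_inner_A_le: assumes e: "e \<in> carrier_vec d"
  shows "P.rinner (A *\<^sub>v e) (A *\<^sub>v e) \<le> \<alpha> * M.rinner e e"
proof -
  have "P.rinner (A *\<^sub>v e) (A *\<^sub>v e) = (At *\<^sub>v (A *\<^sub>v e)) \<bullet> (At *\<^sub>v (A *\<^sub>v e)) + \<nu> * ((A *\<^sub>v e) \<bullet> (A *\<^sub>v e))"
    unfolding reg_inner_def ..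
  also have "\<dots> \<le> \<alpha> * ((A *\<^sub>v e) \<bullet> (A *\<^sub>v e)) + \<nu> * (\<alpha> * (e \<bullet> e))"
    using At_bound[of "A *\<^sub>v e"] A_bound[OF e] e nu_pos by (intro add_mono mult_left_mono) auto
  also have "\<dots> = \<alpha> * M.rinner e e" unfolding reg_inner_def by (simp add: algebra_simps)
  finally show ?thesis .
qed

lemma error_constant_le: "4 / \<nu>\<^sup>2 * \<alpha> * \<delta>\<^sup>2 * (\<beta> + \<nu>) \<le> (1/40)\<^sup>2"
proof -
  define a where "a = \<alpha> / \<nu>"
  define b where "b = 1 + a"
  have a: "0 \<le> a" unfolding a_def using alpha_nonneg nu_pos by simp
  have b: "1 \<le> b" unfolding b_def using a by simp
  have e: "4 / \<nu>\<^sup>2 * \<alpha> * (\<beta> + \<nu>) = 16 * a * b"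
    unfolding a_def b_def \<beta>_def using nu_pos by (simp add: field_simps power2_eq_square)
  have kb: "\<kappa> = b" unfolding \<kappa>_def b_def a_def ..
  have "4 / \<nu>\<^sup>2 * \<alpha> * \<delta>\<^sup>2 * (\<beta> + \<nu>) = (4 / \<nu>\<^sup>2 * \<alpha> * (\<beta> + \<nu>)) * \<delta>\<^sup>2"
    by (simp only: mult.assoc mult.commute mult.left_commute)
  also have "\<dots> = (a * b) / (1600 * b^4)"
    unfolding e kb using b by (simp add: field_simps power2_eq_square power4_eq_xxxx)
  also have "\<dots> \<le> b^4 / (1600 * b^4)"
  proof (rule divide_right_mono)
    have bb: "1 \<le> b * b" using mult_mono[OF b b] b by simp
    have "a * b \<le> b * b" using a b by (simp add: mult_right_mono b_def)
    also have "\<dots> \<le> b^4" using mult_left_mono[OF bb, of "b * b"] by (simp add: power4_eq_xxxx mult.assoc)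
    finally show "a * b \<le> b^4" .
  qed (use b in simp)
  also have "\<dots> = (1/40)\<^sup>2" using b by (simp add: power2_eq_square)
  finally show ?thesis .
qed

definition pre_error :: "real vec \<Rightarrow> real vec" where
  "pre_error w = approx_Pinv (Q.G *\<^sub>v w) - precond w"

lemma pre_error_carrier [simp]: "w \<in> carrier_vec n \<Longrightarrow> pre_error w \<in> carrier_vec n"
  unfolding pre_error_def using Q.gram_carrier by simp

lemma pre_error_dim [simp]: "w \<in> carrier_vec n \<Longrightarrow> dim_vec (pre_error w) = n"
  using pre_error_carrier carrier_vecD by blast

lemma approx_Pinv_gram_Q: "w \<in> carrier_vec n \<Longrightarrow> approx_Pinv (Q.G *\<^sub>v w) = precond w + pre_error w"
  unfolding pre_error_def using Q.gram_carrier by (intro eq_vecI) auto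

lemma pre_error_bound: assumes w: "w \<in> carrier_vec n"
  shows "Q.rinner (pre_error w) (pre_error w) \<le> (1/40)\<^sup>2 * Q.rinner w w"
proof -
  define r where "r = Q.G *\<^sub>v w"
  define u where "u = At *\<^sub>v r"
  define e where "e = refined_solve u - M.Ginv *\<^sub>v u"
  have r: "r \<in> carrier_vec n" unfolding r_def using w Q.gram_carrier by simp
  have u: "u \<in> carrier_vec d" unfolding u_def using r by simp
  have e: "e \<in> carrier_vec d" unfolding e_def using u by simp
  have "approx_Pinv r - precond w = (-1/\<nu>) \<cdot>\<^sub>v (A *\<^sub>v e)"
    unfolding approx_Pinv_def precond_def r_def[symmetric] Pinv_Woodbury[OF r] u_def[symmetric] e_def
    using r u nu_pos by (intro eq_vecI) (auto simp: mult_minus_distrib_mat_vec[OF A] field_simps)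
  hence "Q.rinner (approx_Pinv r - precond w) (approx_Pinv r - precond w)
      \<le> 4 * P.rinner ((-1/\<nu>) \<cdot>\<^sub>v (A *\<^sub>v e)) ((-1/\<nu>) \<cdot>\<^sub>v (A *\<^sub>v e))"
    using approx_inner(1) e by simp
  also have "\<dots> = 4 / \<nu>\<^sup>2 * P.rinner (A *\<^sub>v e) (A *\<^sub>v e)"
    using e by (simp add: P.inner_simps power2_eq_square)
  also have "\<dots> \<le> 4 / \<nu>\<^sup>2 * (\<alpha> * M.rinner e e)"
    using P_inner_A_le[OF e] by (intro mult_left_mono) auto
  also have "\<dots> \<le> 4 / \<nu>\<^sup>2 * (\<alpha> * (\<delta>\<^sup>2 * (u \<bullet> (M.Ginv *\<^sub>v u))))"
    using refined_solve_error[OF u] alpha_nonneg unfolding e_def by (intro mult_left_mono) auto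
  also have "\<dots> \<le> 4 / \<nu>\<^sup>2 * (\<alpha> * (\<delta>\<^sup>2 * (r \<bullet> r)))"
    using scalar_prod_Minv_At_le[OF r] alpha_nonneg unfolding u_def by (intro mult_left_mono) auto
  also have "\<dots> \<le> 4 / \<nu>\<^sup>2 * (\<alpha> * (\<delta>\<^sup>2 * ((\<beta> + \<nu>) * Q.rinner w w)))"
    using scalar_prod_gram_Q_le[OF w] alpha_nonneg unfolding r_def
    by (intro mult_left_mono) auto
  also have "\<dots> = (4 / \<nu>\<^sup>2 * \<alpha> * \<delta>\<^sup>2 * (\<beta> + \<nu>)) * Q.rinner w w" by simp
  also have "\<dots> \<le> (1/40)\<^sup>2 * Q.rinner w w"
    using error_constant_le Q.inner_self_nonneg by (rule mult_right_mono)
  finally show ?thesis unfolding r_def pre_error_def .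
qed

lemma pre_error_norm_le: "w \<in> carrier_vec n \<Longrightarrow> Q.rnorm (pre_error w) \<le> (1/40) * Q.rnorm w"
  using Q.norm_le_iff[of "1/40"] pre_error_bound by simp

section \<open>The preconditioned Chebyshev iteration\<close>

definition exact_x :: "real vec \<Rightarrow> real vec" where
  "exact_x b = N.Ginv *\<^sub>v b"

definition exact_y :: "real vec \<Rightarrow> real vec" where
  "exact_y b = B *\<^sub>v exact_x b"

lemma exact_carrier [simp]:
  "b \<in> carrier_vec s \<Longrightarrow> exact_x b \<in> carrier_vec s" "b \<in> carrier_vec s \<Longrightarrow> exact_y b \<in> carrier_vec n"
  unfolding exact_x_def exact_y_def by simp_all

lemma exact_dim [simp]: "b \<in> carrier_vec s \<Longrightarrow> dim_vec (exact_x b) = s" "b \<in> carrier_vec s \<Longrightarrow> dim_vec (exact_y b) = n"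
  using exact_carrier carrier_vecD by blast+

lemma exact_x_eq: "b \<in> carrier_vec s \<Longrightarrow> Bt *\<^sub>v exact_y b + \<nu> \<cdot>\<^sub>v exact_x b = b"
  unfolding exact_y_def exact_x_def using N.gram_inv_right N.gram_mult_vec by simp

lemma gram_Q_exact_y: assumes b: "b \<in> carrier_vec s"
  shows "Q.G *\<^sub>v exact_y b = B *\<^sub>v b"
proof -
  have "B *\<^sub>v b = B *\<^sub>v (Bt *\<^sub>v exact_y b) + \<nu> \<cdot>\<^sub>v exact_y b"
    using arg_cong[OF exact_x_eq[OF b], of "(*\<^sub>v) B"] b
    by (simp add: mult_add_distrib_mat_vec[OF B] mult_mat_vec[OF B] exact_y_def)
  thus ?thesis using b by (simp add: Q.gram_mult_vec)
qed

definition cheb_step :: "real vec \<Rightarrow> real vec \<Rightarrow> real vec" where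
  "cheb_step b y = (let g = approx_Pinv (B *\<^sub>v b - Q.G *\<^sub>v y) in
     y + (544/353) \<cdot>\<^sub>v g - (128/353) \<cdot>\<^sub>v approx_Pinv (Q.G *\<^sub>v g))"

lemma cheb_step_carrier [simp]: "b \<in> carrier_vec s \<Longrightarrow> y \<in> carrier_vec n \<Longrightarrow> cheb_step b y \<in> carrier_vec n"
  unfolding cheb_step_def Let_def using Q.gram_carrier by simp

lemma cheb_step_error: assumes b: "b \<in> carrier_vec s" and y: "y \<in> carrier_vec n"
  defines "w \<equiv> exact_y b - y"
  shows "cheb_step b y - exact_y b = (544/353) \<cdot>\<^sub>v pre_error w
    - (128/353) \<cdot>\<^sub>v (precond (pre_error w) + pre_error (approx_Pinv (Q.G *\<^sub>v w))) - cheb_residual w"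
proof -
  have w: "w \<in> carrier_vec n" unfolding w_def using b y by simp
  have r: "B *\<^sub>v b - Q.G *\<^sub>v y = Q.G *\<^sub>v w"
    unfolding w_def using b y Q.gram_carrier by (simp add: mult_minus_distrib_mat_vec gram_Q_exact_y)
  define g where "g = approx_Pinv (Q.G *\<^sub>v w)"
  have g: "g \<in> carrier_vec n" unfolding g_def using w Q.gram_carrier by simp
  have g_eq: "g = precond w + pre_error w" unfolding g_def by (rule approx_Pinv_gram_Q[OF w])
  have "approx_Pinv (Q.G *\<^sub>v g) = precond g + pre_error g" by (rule approx_Pinv_gram_Q[OF g])
  also have "precond g = precond (precond w) + precond (pre_error w)"
    unfolding g_eq using w by (simp add: precond_add)
  finally have "approx_Pinv (Q.G *\<^sub>v g) = precond (precond w) + precond (pre_error w) + pre_error g" .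
  thus ?thesis unfolding cheb_step_def Let_def r g_def[symmetric] cheb_residual_def
    using b y w g by (subst g_eq, intro eq_vecI) (auto simp: w_def algebra_simps)
qed

lemma cheb_step_contraction: assumes b: "b \<in> carrier_vec s" and y: "y \<in> carrier_vec n"
  shows "Q.rnorm (cheb_step b y - exact_y b) \<le> (3/4) * Q.rnorm (y - exact_y b)"
proof -
  define w where "w = exact_y b - y"
  define g where "g = approx_Pinv (Q.G *\<^sub>v w)"
  define E1 E2 where "E1 = pre_error w" and "E2 = pre_error g"
  have w: "w \<in> carrier_vec n" unfolding w_def using b y by simp
  have g: "g \<in> carrier_vec n" unfolding g_def using w Q.gram_carrier by simp
  have E: "E1 \<in> carrier_vec n" "E2 \<in> carrier_vec n" unfolding E1_def E2_def using w g by simp_all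
  have "Q.rnorm g \<le> Q.rnorm (precond w) + Q.rnorm E1"
    unfolding g_def approx_Pinv_gram_Q[OF w] E1_def using w by (intro Q.norm_triangle) auto
  hence g_bound: "Q.rnorm g \<le> (4 + 1/40) * Q.rnorm w"
    using precond_norm_le[OF w] pre_error_norm_le[OF w] unfolding E1_def by simp
  have "Q.rnorm (cheb_step b y - exact_y b)
      \<le> Q.rnorm ((544/353) \<cdot>\<^sub>v E1 - (128/353) \<cdot>\<^sub>v (precond E1 + E2)) + Q.rnorm (cheb_residual w)"
    unfolding cheb_step_error[OF b y] w_def[symmetric] g_def[symmetric] E1_def[symmetric] E2_def[symmetric]
    using w E by (intro Q.norm_triangle_diff) auto
  also have "Q.rnorm ((544/353) \<cdot>\<^sub>v E1 - (128/353) \<cdot>\<^sub>v (precond E1 + E2))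
      \<le> Q.rnorm ((544/353) \<cdot>\<^sub>v E1) + Q.rnorm ((128/353) \<cdot>\<^sub>v (precond E1 + E2))"
    using E by (intro Q.norm_triangle_diff) auto
  also have "\<dots> = (544/353) * Q.rnorm E1 + (128/353) * Q.rnorm (precond E1 + E2)"
    using E by (simp add: Q.norm_scale)
  also have "Q.rnorm (precond E1 + E2) \<le> Q.rnorm (precond E1) + Q.rnorm E2"
    using E by (intro Q.norm_triangle) auto
  also have "(544/353) * Q.rnorm E1 + (128/353) * (Q.rnorm (precond E1) + Q.rnorm E2)
      + Q.rnorm (cheb_residual w) \<le> (3/4) * Q.rnorm w"
    \<comment> \<open>the errors of \<open>approx_Pinv\<close> add less than \<open>3/4 - 225/353\<close> to the Chebyshev factor\<close>
    using pre_error_norm_le[OF w] pre_error_norm_le[OF g] g_bound Q.norm_nonneg[of w]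
      precond_norm_le[OF E(1)] cheb_residual_norm_le[OF w]
    unfolding E1_def E2_def by (simp add: field_simps)
  finally show ?thesis unfolding w_def using b y by (simp add: Q.norm_diff_commute)
qed

definition cheb_iterate :: "real vec \<Rightarrow> nat \<Rightarrow> real vec" where
  "cheb_iterate b k = (cheb_step b ^^ k) (0\<^sub>v n)"

lemma cheb_iterate_carrier [simp]: "b \<in> carrier_vec s \<Longrightarrow> cheb_iterate b k \<in> carrier_vec n"
  unfolding cheb_iterate_def by (induct k) auto

lemma cheb_iterate_Suc: "cheb_iterate b (Suc k) = cheb_step b (cheb_iterate b k)"
  unfolding cheb_iterate_def by simp

lemma cheb_iterate_error: assumes b: "b \<in> carrier_vec s"
  shows "Q.rnorm (cheb_iterate b k - exact_y b) \<le> (3/4)^k * Q.rnorm (exact_y b)"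
proof (induct k)
  case 0 show ?case unfolding cheb_iterate_def using b Q.norm_diff_commute[of "0\<^sub>v n" "exact_y b"] by simp
next
  case (Suc k)
  have "Q.rnorm (cheb_iterate b (Suc k) - exact_y b) \<le> (3/4) * Q.rnorm (cheb_iterate b k - exact_y b)"
    unfolding cheb_iterate_Suc using cheb_step_contraction[OF b] b by simp
  also have "\<dots> \<le> (3/4) * ((3/4)^k * Q.rnorm (exact_y b))" using Suc by simp
  finally show ?case by simp
qed

definition solution_from :: "real vec \<Rightarrow> real vec \<Rightarrow> real vec" where
  "solution_from b y = (1/\<nu>) \<cdot>\<^sub>v (b - Bt *\<^sub>v y)"

lemma solution_from_carrier [simp]:
  "b \<in> carrier_vec s \<Longrightarrow> y \<in> carrier_vec n \<Longrightarrow> solution_from b y \<in> carrier_vec s"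
  unfolding solution_from_def by simp

lemma solution_from_error: assumes b: "b \<in> carrier_vec s" and y: "y \<in> carrier_vec n"
  shows "N.rinner (solution_from b y - exact_x b) (solution_from b y - exact_x b)
    \<le> (\<beta> + \<nu>) / \<nu>\<^sup>2 * Q.rinner (y - exact_y b) (y - exact_y b)"
proof -
  define z where "z = y - exact_y b"
  define v where "v = Bt *\<^sub>v z"
  have z: "z \<in> carrier_vec n" unfolding z_def using b y by simp
  have v: "v \<in> carrier_vec s" unfolding v_def using z by simp
  have "solution_from b y - exact_x b = (-1/\<nu>) \<cdot>\<^sub>v v"
  proof -
    have "(Bt *\<^sub>v exact_y b) $ i + \<nu> * exact_x b $ i = b $ i" if "i < s" for i
      using arg_cong[OF exact_x_eq[OF b], of "\<lambda>u. u $ i"] that b by simp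
    hence "exact_x b = (1/\<nu>) \<cdot>\<^sub>v (b - Bt *\<^sub>v exact_y b)"
      using b nu_pos by (intro eq_vecI) (auto simp: field_simps)
    thus ?thesis unfolding solution_from_def v_def z_def using b y nu_pos
      by (intro eq_vecI) (auto simp: mult_minus_distrib_mat_vec[OF Q.W] field_simps)
  qed
  hence "N.rinner (solution_from b y - exact_x b) (solution_from b y - exact_x b) = N.rinner v v / \<nu>\<^sup>2"
    using v by (simp add: N.inner_simps power2_eq_square)
  also have "N.rinner v v \<le> (\<beta> + \<nu>) * (v \<bullet> v)"
    using B_bound[OF v] unfolding reg_inner_def by (simp add: algebra_simps)
  also have "\<dots> \<le> (\<beta> + \<nu>) * Q.rinner z z"
    unfolding v_def using Q.inner_self_ge_image beta_nonneg nu_pos by (intro mult_left_mono) auto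
  finally show ?thesis unfolding z_def by (simp add: divide_right_mono)
qed

lemma exact_y_bound: assumes b: "b \<in> carrier_vec s"
  shows "Q.rinner (exact_y b) (exact_y b) \<le> (\<beta> + \<nu>) * (b \<bullet> (N.Ginv *\<^sub>v b))"
proof -
  define p where "p = exact_y b"
  have p: "p \<in> carrier_vec n" unfolding p_def using b by simp
  have "Q.rinner p p \<le> (\<beta> + \<nu>) * (p \<bullet> p)"
    using Bt_bound[OF p] unfolding reg_inner_def by (simp add: algebra_simps)
  also have "p \<bullet> p \<le> N.rinner (exact_x b) (exact_x b)"
    unfolding p_def exact_y_def by (rule N.inner_self_ge_image)
  also have "\<dots> = b \<bullet> (N.Ginv *\<^sub>v b)"
    unfolding exact_x_def using N.scalar_prod_gram_inv_self[OF b] by simp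
  finally show ?thesis unfolding p_def using beta_nonneg nu_pos by (simp add: mult_left_mono)
qed

lemma beta_nu: "(\<beta> + \<nu>) / \<nu> = 4 * \<kappa>"
  unfolding \<beta>_def \<kappa>_def using nu_pos by (simp add: field_simps)

lemma cheb_solution_error: assumes b: "b \<in> carrier_vec s"
  shows "N.rinner (solution_from b (cheb_iterate b k) - exact_x b) (solution_from b (cheb_iterate b k) - exact_x b)
    \<le> (4 * \<kappa>)\<^sup>2 * (9/16)^k * (b \<bullet> (N.Ginv *\<^sub>v b))"
proof -
  have "Q.rinner (cheb_iterate b k - exact_y b) (cheb_iterate b k - exact_y b)
      \<le> ((3/4)^k)\<^sup>2 * Q.rinner (exact_y b) (exact_y b)"
    using cheb_iterate_error[OF b, of k] Q.norm_le_iff[of "(3/4)^k"] by simp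
  also have "\<dots> \<le> ((3/4)^k)\<^sup>2 * ((\<beta> + \<nu>) * (b \<bullet> (N.Ginv *\<^sub>v b)))"
    using exact_y_bound[OF b] by (rule mult_left_mono) simp
  finally have "(\<beta> + \<nu>) / \<nu>\<^sup>2 * Q.rinner (cheb_iterate b k - exact_y b) (cheb_iterate b k - exact_y b)
      \<le> (\<beta> + \<nu>) / \<nu>\<^sup>2 * (((3/4)^k)\<^sup>2 * ((\<beta> + \<nu>) * (b \<bullet> (N.Ginv *\<^sub>v b))))"
    using beta_nonneg nu_pos by (intro mult_left_mono) auto
  also have "\<dots> = ((\<beta> + \<nu>) / \<nu>)\<^sup>2 * (9/16)^k * (b \<bullet> (N.Ginv *\<^sub>v b))"
    by (simp add: power2_eq_square power_mult_distrib[symmetric] field_simps power_mult[symmetric])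
  finally show ?thesis
    using solution_from_error[OF b cheb_iterate_carrier[OF b, of k]] unfolding beta_nu by linarith
qed

end

section \<open>The iteration as a straight-line program\<close>

lemma exec_append: "exec A B f (p @ q) r = exec A B f q (exec A B f p r)"
  by (induct p arbitrary: r) auto

lemma exec_cost_append:
  "exec_cost A B f cA cB (p @ q) r = exec_cost A B f cA cB p r + exec_cost A B f cA cB q (exec A B f p r)"
  by (induct p arbitrary: r) auto

lemma num_calls_append: "num_calls (p @ q) = num_calls p + num_calls q"
  unfolding num_calls_def by simp

text \<open>Program fragments, parametrized by the index \<open>L\<close> of the first register they create.\<close>
definition gram_Q_prog :: "real \<Rightarrow> nat \<Rightarrow> nat \<Rightarrow> instr list" where
  "gram_Q_prog \<nu> j L = [MulBt j, MulB L, LinComb 1 (L + 1) \<nu> j]"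

definition approx_Pinv_prog :: "real \<Rightarrow> nat \<Rightarrow> nat \<Rightarrow> instr list" where
  "approx_Pinv_prog \<nu> i L = [MulAt i, CallF L, MulA (L + 1), MulAt (L + 2), LinComb 1 L (-1) (L + 3),
     LinComb 1 (L + 4) (-\<nu>) (L + 1), CallF (L + 5), LinComb 1 (L + 1) 1 (L + 6), MulA (L + 7),
     LinComb (1/\<nu>) i (-1/\<nu>) (L + 8)]"

text \<open>Register \<open>1\<close> holds \<open>B b\<close> and register \<open>L - 1\<close> the current iterate.\<close>
definition cheb_step_prog :: "real \<Rightarrow> nat \<Rightarrow> instr list" where
  "cheb_step_prog \<nu> L = gram_Q_prog \<nu> (L - 1) L @ [LinComb 1 1 (-1) (L + 2)] @ approx_Pinv_prog \<nu> (L + 3) (L + 4)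
     @ gram_Q_prog \<nu> (L + 13) (L + 14) @ approx_Pinv_prog \<nu> (L + 16) (L + 17)
     @ [LinComb 1 (L - 1) (544/353) (L + 13), LinComb 1 (L + 27) (-(128/353)) (L + 26)]"

fun cheb_steps_prog :: "real \<Rightarrow> nat \<Rightarrow> instr list" where
  "cheb_steps_prog \<nu> 0 = []"
| "cheb_steps_prog \<nu> (Suc k) = cheb_steps_prog \<nu> k @ cheb_step_prog \<nu> (3 + 29 * k)"

definition cheb_prog :: "real \<Rightarrow> nat \<Rightarrow> instr list" where
  "cheb_prog \<nu> T = [MulB 0, LinComb 0 1 0 1] @ cheb_steps_prog \<nu> T
     @ [MulBt (2 + 29 * T), LinComb (1/\<nu>) 0 (-1/\<nu>) (3 + 29 * T)]"

lemma num_calls_cheb_prog: "num_calls (cheb_prog \<nu> T) = 4 * T"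
proof -
  have "num_calls (cheb_steps_prog \<nu> k) = 4 * k" for k
    by (induct k) (auto simp: num_calls_append cheb_step_prog_def gram_Q_prog_def approx_Pinv_prog_def
        num_calls_def)
  thus ?thesis unfolding cheb_prog_def num_calls_append by (simp add: num_calls_def)
qed

context solver_setting
begin

text \<open>The registers written by \<open>gram_Q_prog\<close> and \<open>approx_Pinv_prog\<close>, literally as the
  instructions compute them.\<close>
definition gram_Q_regs :: "real vec \<Rightarrow> real vec list" where
  "gram_Q_regs w = [Bt *\<^sub>v w, B *\<^sub>v (Bt *\<^sub>v w), 1 \<cdot>\<^sub>v (B *\<^sub>v (Bt *\<^sub>v w)) + \<nu> \<cdot>\<^sub>v w]"

definition approx_Pinv_regs :: "real vec \<Rightarrow> real vec list" where
  "approx_Pinv_regs v = (let u = At *\<^sub>v v; x = f u; a = At *\<^sub>v (A *\<^sub>v x);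
     u' = 1 \<cdot>\<^sub>v (1 \<cdot>\<^sub>v u + (-1) \<cdot>\<^sub>v a) + (-\<nu>) \<cdot>\<^sub>v x; h = 1 \<cdot>\<^sub>v x + 1 \<cdot>\<^sub>v f u' in
     [u, x, A *\<^sub>v x, a, 1 \<cdot>\<^sub>v u + (-1) \<cdot>\<^sub>v a, u', f u', h, A *\<^sub>v h, (1/\<nu>) \<cdot>\<^sub>v v + (-1/\<nu>) \<cdot>\<^sub>v (A *\<^sub>v h)])"

lemma length_regs [simp]: "length (gram_Q_regs w) = 3" "length (approx_Pinv_regs v) = 10"
  unfolding gram_Q_regs_def approx_Pinv_regs_def Let_def by simp_all

lemma gram_Q_regs_last [simp]: "w \<in> carrier_vec n \<Longrightarrow> gram_Q_regs w ! 2 = Q.G *\<^sub>v w"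
  unfolding gram_Q_regs_def by (simp add: Q.gram_mult_vec)

lemma approx_Pinv_regs_last [simp]: assumes v: "v \<in> carrier_vec n"
  shows "approx_Pinv_regs v ! 9 = approx_Pinv v"
proof -
  define u where "u = At *\<^sub>v v"
  have u: "u \<in> carrier_vec d" unfolding u_def using v by simp
  have "1 \<cdot>\<^sub>v (1 \<cdot>\<^sub>v u + (-1) \<cdot>\<^sub>v (At *\<^sub>v (A *\<^sub>v f u))) + (-\<nu>) \<cdot>\<^sub>v f u = u - M.G *\<^sub>v f u"
    using u f_solution(1)[OF u] by (intro eq_vecI) (auto simp: M.gram_mult_vec)
  thus ?thesis
    unfolding approx_Pinv_regs_def approx_Pinv_def refined_solve_def Let_def u_def[symmetric]
    using v u f_solution(1)[OF u] by (intro eq_vecI) (auto simp: diff_divide_distrib)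
qed

lemma exec_gram_Q_prog: assumes "length r = L" "j < L" "r ! j \<in> carrier_vec n"
  shows "exec A B f (gram_Q_prog \<nu> j L) r = r @ gram_Q_regs (r ! j)"
    and "exec_cost A B f cA cB (gram_Q_prog \<nu> j L) r = 2 * cB + real n"
  using assms by (simp_all add: gram_Q_prog_def gram_Q_regs_def get_reg_def nth_append mat_app_def)

lemma exec_approx_Pinv_prog: assumes "length r = L" "i < L" "r ! i \<in> carrier_vec n"
  shows "exec A B f (approx_Pinv_prog \<nu> i L) r = r @ approx_Pinv_regs (r ! i)"
    and "exec_cost A B f cA cB (approx_Pinv_prog \<nu> i L) r = 4 * cA + 3 * real d + real n"
  using assms f_solution(1)
  by (simp_all add: approx_Pinv_prog_def approx_Pinv_regs_def Let_def get_reg_def nth_append mat_app_def)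

lemma exec_cheb_step_prog:
  assumes r: "length r = L" "3 \<le> L" "r ! 1 = B *\<^sub>v b" "r ! (L - 1) = y"
    and b: "b \<in> carrier_vec s" and y: "y \<in> carrier_vec n"
  shows "\<exists>rs. exec A B f (cheb_step_prog \<nu> L) r = r @ rs \<and> length rs = 29 \<and> rs ! 28 = cheb_step b y"
    and "exec_cost A B f cA cB (cheb_step_prog \<nu> L) r = 4 * cB + 8 * cA + 6 * real d + 7 * real n"
proof -
  define res where "res = 1 \<cdot>\<^sub>v (B *\<^sub>v b) + (-1) \<cdot>\<^sub>v (Q.G *\<^sub>v y)"
  define g1 where "g1 = approx_Pinv res"
  define y1 where "y1 = 1 \<cdot>\<^sub>v y + (544/353) \<cdot>\<^sub>v g1"
  define y2 where "y2 = 1 \<cdot>\<^sub>v y1 + (-(128/353)) \<cdot>\<^sub>v approx_Pinv (Q.G *\<^sub>v g1)"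
  define rs where "rs = gram_Q_regs y @ [res] @ approx_Pinv_regs res @ gram_Q_regs g1
    @ approx_Pinv_regs (Q.G *\<^sub>v g1) @ [y1, y2]"
  have res: "res \<in> carrier_vec n" unfolding res_def using b y Q.gram_carrier by simp
  have g1: "g1 \<in> carrier_vec n" unfolding g1_def using res by simp
  have y1: "y1 \<in> carrier_vec n" unfolding y1_def using y g1 by simp
  have L: "L - 1 < L" "L - 1 < L + 27" using r(2) by simp_all
  have exec: "exec A B f (cheb_step_prog \<nu> L) r = r @ rs"
    using r b y res g1 y1 Q.gram_carrier L
    by (simp add: cheb_step_prog_def rs_def exec_append exec_gram_Q_prog exec_approx_Pinv_prog
        nth_append get_reg_def res_def g1_def y1_def y2_def)
  have "res = B *\<^sub>v b - Q.G *\<^sub>v y"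
    unfolding res_def using b y Q.gram_carrier by (intro eq_vecI) auto
  hence "y2 = cheb_step b y"
    unfolding y2_def y1_def g1_def cheb_step_def Let_def using b y Q.gram_carrier
    by (intro eq_vecI) (auto simp: algebra_simps)
  thus "\<exists>rs. exec A B f (cheb_step_prog \<nu> L) r = r @ rs \<and> length rs = 29 \<and> rs ! 28 = cheb_step b y"
    using exec by (intro exI[of _ rs]) (simp add: rs_def nth_append)
  show "exec_cost A B f cA cB (cheb_step_prog \<nu> L) r = 4 * cB + 8 * cA + 6 * real d + 7 * real n"
    using r b y res g1 y1 Q.gram_carrier L
    by (simp add: cheb_step_prog_def exec_cost_append exec_append exec_gram_Q_prog exec_approx_Pinv_prog
        nth_append get_reg_def res_def g1_def y1_def)
qed

lemma exec_cheb_steps_prog: assumes b: "b \<in> carrier_vec s"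
  defines "r0 \<equiv> [b, B *\<^sub>v b, 0\<^sub>v n]"
  shows "(\<exists>rs. exec A B f (cheb_steps_prog \<nu> k) r0 = r0 @ rs \<and> length rs = 29 * k
      \<and> (r0 @ rs) ! (2 + 29 * k) = cheb_iterate b k)
    \<and> exec_cost A B f cA cB (cheb_steps_prog \<nu> k) r0 = real k * (4 * cB + 8 * cA + 6 * real d + 7 * real n)"
proof (induct k)
  case 0 show ?case unfolding r0_def cheb_iterate_def by simp
next
  case (Suc k)
  then obtain rs where rs: "exec A B f (cheb_steps_prog \<nu> k) r0 = r0 @ rs" "length rs = 29 * k"
      "(r0 @ rs) ! (2 + 29 * k) = cheb_iterate b k"
    and cost: "exec_cost A B f cA cB (cheb_steps_prog \<nu> k) r0 = real k * (4 * cB + 8 * cA + 6 * real d + 7 * real n)"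
    by blast
  have R: "length (r0 @ rs) = 3 + 29 * k" "(r0 @ rs) ! 1 = B *\<^sub>v b"
    using rs(2) unfolding r0_def by (simp_all add: nth_append)
  note step = exec_cheb_step_prog[OF R(1) _ R(2), of "cheb_iterate b k", OF _ _ b cheb_iterate_carrier[OF b]]
  obtain rs' where rs': "exec A B f (cheb_step_prog \<nu> (3 + 29 * k)) (r0 @ rs) = (r0 @ rs) @ rs'"
      "length rs' = 29" "rs' ! 28 = cheb_step b (cheb_iterate b k)"
    using step(1) rs(3) by auto
  show ?case
  proof
    show "\<exists>rs. exec A B f (cheb_steps_prog \<nu> (Suc k)) r0 = r0 @ rs \<and> length rs = 29 * Suc k
        \<and> (r0 @ rs) ! (2 + 29 * Suc k) = cheb_iterate b (Suc k)"
      using rs rs' R(1) by (intro exI[of _ "rs @ rs'"]) (simp add: exec_append nth_append cheb_iterate_Suc)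
    show "exec_cost A B f cA cB (cheb_steps_prog \<nu> (Suc k)) r0
        = real (Suc k) * (4 * cB + 8 * cA + 6 * real d + 7 * real n)"
      using cost rs(1) step(2) rs(3) by (simp add: exec_cost_append algebra_simps)
  qed
qed

lemma cheb_prog_run: assumes b: "b \<in> carrier_vec s"
  shows "run_prog A B f (cheb_prog \<nu> T) b = solution_from b (cheb_iterate b T)"
    and "prog_cost A B f cA cB (cheb_prog \<nu> T) b
      = 2 * cB + real n + real s + real T * (4 * cB + 8 * cA + 6 * real d + 7 * real n)"
proof -
  define r0 where "r0 = [b, B *\<^sub>v b, 0\<^sub>v n]"
  have init: "exec A B f [MulB 0, LinComb 0 1 0 1] [b] = r0"
    and init_cost: "exec_cost A B f cA cB [MulB 0, LinComb 0 1 0 1] [b] = cB + real n"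
    unfolding r0_def using b by (auto simp: get_reg_def mat_app_def Let_def intro!: eq_vecI)
  obtain rs where rs: "exec A B f (cheb_steps_prog \<nu> T) r0 = r0 @ rs" "length rs = 29 * T"
      "(r0 @ rs) ! (2 + 29 * T) = cheb_iterate b T"
    and cost: "exec_cost A B f cA cB (cheb_steps_prog \<nu> T) r0 = real T * (4 * cB + 8 * cA + 6 * real d + 7 * real n)"
    using exec_cheb_steps_prog[OF b, of T] unfolding r0_def by blast
  define y where "y = cheb_iterate b T"
  have y: "y \<in> carrier_vec n" unfolding y_def using b by simp
  have regs: "get_reg (r0 @ rs) (2 + 29 * T) = y" "get_reg (r0 @ rs @ [Bt *\<^sub>v y]) 0 = b"
      "get_reg (r0 @ rs @ [Bt *\<^sub>v y]) (3 + 29 * T) = Bt *\<^sub>v y"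
    using rs unfolding get_reg_def y_def r0_def by (simp_all add: nth_append)
  have out: "(1/\<nu>) \<cdot>\<^sub>v b + (-1/\<nu>) \<cdot>\<^sub>v (Bt *\<^sub>v y) = solution_from b y"
    unfolding solution_from_def using b y by (intro eq_vecI) (auto simp: diff_divide_distrib)
  show "run_prog A B f (cheb_prog \<nu> T) b = solution_from b (cheb_iterate b T)"
    unfolding run_prog_def cheb_prog_def exec_append init rs(1)
    using regs b y out by (simp add: mat_app_def y_def)
  show "prog_cost A B f cA cB (cheb_prog \<nu> T) b
      = 2 * cB + real n + real s + real T * (4 * cB + 8 * cA + 6 * real d + 7 * real n)"
    unfolding prog_cost_def cheb_prog_def exec_cost_append exec_append init init_cost rs(1) cost
    using regs b y by (simp add: mat_app_def)
qed

lemma cheb_prog_eps_solver: assumes T: "(4 * \<kappa>)\<^sup>2 * (9/16)^T \<le> \<epsilon>"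
  shows "eps_solver (transpose_mat B * B + \<nu> \<cdot>\<^sub>m 1\<^sub>m s) \<epsilon> (run_prog A B f (cheb_prog \<nu> T))"
proof -
  have N: "transpose_mat B * B + \<nu> \<cdot>\<^sub>m 1\<^sub>m s = N.G" unfolding gram_reg_def by simp
  show ?thesis unfolding eps_solver_def eps_solution_def N
  proof (intro allI impI conjI)
    fix b :: "real vec" assume "dim_vec b = dim_row N.G"
    hence b: "b \<in> carrier_vec s" using carrier_matD(1)[OF N.gram_carrier] by (intro carrier_vecI) simp
    define x where "x = solution_from b (cheb_iterate b T)"
    have x: "x \<in> carrier_vec s" unfolding x_def using b by simp
    show "dim_vec (run_prog A B f (cheb_prog \<nu> T) b) = dim_vec b"
      using x b unfolding cheb_prog_run(1)[OF b] x_def[symmetric] by simp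
    have "qform N.G (x - N.Ginv *\<^sub>v b) = N.rinner (x - exact_x b) (x - exact_x b)"
      unfolding exact_x_def using x b by (intro N.qform_gram) simp
    also have "\<dots> \<le> (4 * \<kappa>)\<^sup>2 * (9/16)^T * (b \<bullet> (N.Ginv *\<^sub>v b))"
      unfolding x_def by (rule cheb_solution_error[OF b])
    also have "\<dots> \<le> \<epsilon> * (b \<bullet> (N.Ginv *\<^sub>v b))"
      by (rule mult_right_mono[OF T]) (simp add: N.scalar_prod_gram_inv_self[OF b] N.inner_self_nonneg)
    finally show "qform N.G (run_prog A B f (cheb_prog \<nu> T) b - N.Ginv *\<^sub>v b) \<le> \<epsilon> * qform N.Ginv b"
      unfolding cheb_prog_run(1)[OF b] x_def[symmetric] qform_def .
  qed
qed

lemma cheb_prog_cost: assumes cA: "0 \<le> cA" and cB: "0 \<le> cB" and b: "b \<in> carrier_vec s"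
    and T: "real T \<le> 9 + 4 * l" and l: "0 \<le> l"
  shows "prog_cost A B f cA cB (cheb_prog \<nu> T) b
    \<le> 100 * (real n + (cA + real n + real d) + (cB + real n + real s)) * (1 + l)"
proof -
  define D where "D = real n + (cA + real n + real d) + (cB + real n + real s)"
  have D: "0 \<le> D" unfolding D_def using cA cB by simp
  have "real T * (4 * cB + 8 * cA + 6 * real d + 7 * real n) \<le> real T * (8 * D)"
    unfolding D_def using cA cB by (intro mult_left_mono) auto
  also have "\<dots> \<le> (9 + 4 * l) * (8 * D)" using T D by (intro mult_right_mono) auto
  moreover have "2 * cB + real n + real s \<le> 2 * D" unfolding D_def using cA by simp
  ultimately have "prog_cost A B f cA cB (cheb_prog \<nu> T) b \<le> 2 * D + (9 + 4 * l) * (8 * D)"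
    unfolding cheb_prog_run(2)[OF b] by linarith
  also have "\<dots> = 74 * D + 32 * (l * D)" by (simp add: algebra_simps)
  also have "\<dots> \<le> 100 * D + 100 * (l * D)" using D l mult_nonneg_nonneg[OF l D] by linarith
  also have "\<dots> = 100 * D * (1 + l)" by (simp add: algebra_simps)
  finally show ?thesis unfolding D_def .
qed

end

section \<open>Choice of the number of iterations\<close>

lemma ln_four_thirds_ge: "1/4 \<le> ln (4/3::real)"
  using ln_le_minus_one[of "3/4::real"] ln_inverse[of "4/3::real"] by simp

lemma ln_two_bounds: "1/2 \<le> ln (2::real)" "ln (2::real) \<le> 1"
  using ln_le_minus_one[of "1/2::real"] ln_inverse[of "2::real"] ln_le_minus_one[of "2::real"] by simp_all

lemma iteration_count:
  fixes \<kappa> \<epsilon> :: real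
  assumes \<kappa>: "1 \<le> \<kappa>" and \<epsilon>: "0 < \<epsilon>" "\<epsilon> < 1"
  defines "T \<equiv> nat \<lceil>2 * ln (16 * \<kappa>\<^sup>2 / \<epsilon>)\<rceil>"
  shows "(4 * \<kappa>)\<^sup>2 * (9/16)^T \<le> \<epsilon>" and "real (4 * T) \<le> 16 * ln (8 * \<kappa> / \<epsilon>)"
    and "real T \<le> 9 + 4 * ln (\<kappa> / \<epsilon>)"
proof -
  define L where "L = ln (16 * \<kappa>\<^sup>2 / \<epsilon>)"
  have ln_\<kappa>: "0 \<le> ln \<kappa>" using \<kappa> by simp
  have ln_\<epsilon>: "ln \<epsilon> < 0" using \<epsilon> by simp
  have L_eq: "L = 4 * ln 2 + 2 * ln \<kappa> - ln \<epsilon>"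
    unfolding L_def using \<kappa> \<epsilon> ln_realpow[of "2::real" 4]
    by (simp add: ln_div ln_mult ln_realpow)
  have L: "0 < L" unfolding L_eq using ln_two_bounds ln_\<kappa> ln_\<epsilon> by linarith
  have T: "2 * L \<le> real T" "real T < 2 * L + 1"
    unfolding T_def L_def[symmetric] using L by linarith+
  have "ln ((4 * \<kappa>)\<^sup>2 * (9/16)^T) = 4 * ln 2 + 2 * ln \<kappa> - real T * (2 * ln (4/3))"
  proof -
    have "ln (9/16::real) = - 2 * ln (4/3)"
      using ln_realpow[of "3/4::real" 2] ln_inverse[of "4/3::real"] by (simp add: power2_eq_square)
    moreover have "ln ((4 * \<kappa>)\<^sup>2) = 4 * ln 2 + 2 * ln \<kappa>"
      using \<kappa> ln_realpow[of "2::real" 4] by (simp add: ln_mult ln_realpow)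
    ultimately show ?thesis using \<kappa> by (simp add: ln_mult ln_realpow)
  qed
  also have "\<dots> \<le> ln \<epsilon>"
    using T ln_four_thirds_ge L_eq mult_left_mono[OF ln_four_thirds_ge, of "2 * real T"] by simp
  finally show "(4 * \<kappa>)\<^sup>2 * (9/16)^T \<le> \<epsilon>" using \<kappa> \<epsilon> by simp
  have "ln (8 * \<kappa> / \<epsilon>) = 3 * ln 2 + ln \<kappa> - ln \<epsilon>"
    using \<kappa> \<epsilon> ln_realpow[of "2::real" 3] by (simp add: ln_div ln_mult)
  thus "real (4 * T) \<le> 16 * ln (8 * \<kappa> / \<epsilon>)"
    using T L_eq ln_two_bounds ln_\<epsilon> by simp
  have "ln (\<kappa> / \<epsilon>) = ln \<kappa> - ln \<epsilon>" using \<kappa> \<epsilon> by (simp add: ln_div)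
  thus "real T \<le> 9 + 4 * ln (\<kappa> / \<epsilon>)"
    using T L_eq ln_two_bounds ln_\<epsilon> by simp
qed

context precond_setting
begin

lemma cheb_prog_solver:
  assumes \<epsilon>: "0 < \<epsilon>" "\<epsilon> < 1"
  shows "let \<kappa> = 1 + (spec_norm A)\<^sup>2 / \<nu> in
      \<exists>p. real (num_calls p) \<le> 16 * ln (8 * \<kappa> / \<epsilon>) \<and>
        (\<forall>f cA cB. 0 \<le> cA \<longrightarrow> 0 \<le> cB \<longrightarrow>
           eps_solver (transpose_mat A * A + \<nu> \<cdot>\<^sub>m 1\<^sub>m d) (1 / (160 * \<kappa>\<^sup>2)) f \<longrightarrow>
           eps_solver (transpose_mat B * B + \<nu> \<cdot>\<^sub>m 1\<^sub>m s) \<epsilon> (run_prog A B f p) \<and>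
           (\<forall>b. dim_vec b = s \<longrightarrow>
              prog_cost A B f cA cB p b
                \<le> 100 * (real n + (cA + real n + real d) + (cB + real n + real s)) * (1 + ln (\<kappa> / \<epsilon>))))"
  unfolding Let_def \<alpha>_def[symmetric] \<kappa>_def[symmetric]
proof (intro exI[of _ "cheb_prog \<nu> (nat \<lceil>2 * ln (16 * \<kappa>\<^sup>2 / \<epsilon>)\<rceil>)"] conjI allI impI)
  note count = iteration_count[OF kappa_ge_1 \<epsilon>]
  show "real (num_calls (cheb_prog \<nu> (nat \<lceil>2 * ln (16 * \<kappa>\<^sup>2 / \<epsilon>)\<rceil>))) \<le> 16 * ln (8 * \<kappa> / \<epsilon>)"
    using count(2) by (simp add: num_calls_cheb_prog)
  fix f :: "real vec \<Rightarrow> real vec" and cA cB :: real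
  assume cA: "0 \<le> cA" and cB: "0 \<le> cB"
    and "eps_solver (transpose_mat A * A + \<nu> \<cdot>\<^sub>m 1\<^sub>m d) (1 / (160 * \<kappa>\<^sup>2)) f"
  then interpret solver_setting n d s A B \<nu> f by unfold_locales
  show "eps_solver (transpose_mat B * B + \<nu> \<cdot>\<^sub>m 1\<^sub>m s) \<epsilon>
      (run_prog A B f (cheb_prog \<nu> (nat \<lceil>2 * ln (16 * \<kappa>\<^sup>2 / \<epsilon>)\<rceil>)))"
    by (rule cheb_prog_eps_solver[OF count(1)])
  fix b :: "real vec" assume "dim_vec b = s"
  moreover have "0 \<le> ln (\<kappa> / \<epsilon>)" using kappa_ge_1 \<epsilon> by simp
  ultimately show "prog_cost A B f cA cB (cheb_prog \<nu> (nat \<lceil>2 * ln (16 * \<kappa>\<^sup>2 / \<epsilon>)\<rceil>)) b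
      \<le> 100 * (real n + (cA + real n + real d) + (cB + real n + real s)) * (1 + ln (\<kappa> / \<epsilon>))"
    using cheb_prog_cost[OF cA cB carrier_vecI count(3)] by simp
qed

end

theorem lemma5p1:
  "\<exists>C>0. \<forall>(n::nat) (d::nat) (s::nat) (A::real mat) (B::real mat) (\<nu>::real) (\<epsilon>::real).
     A \<in> carrier_mat n d \<longrightarrow> B \<in> carrier_mat n s \<longrightarrow> \<nu> > 0 \<longrightarrow> 0 < \<epsilon> \<longrightarrow> \<epsilon> < 1 \<longrightarrow>
     spectral_approx 4 (A * transpose_mat A + \<nu> \<cdot>\<^sub>m 1\<^sub>m n) (B * transpose_mat B + \<nu> \<cdot>\<^sub>m 1\<^sub>m n) \<longrightarrow>
     (let \<kappa> = 1 + (spec_norm A)\<^sup>2 / \<nu> in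
      \<exists>p. real (num_calls p) \<le> 16 * ln (8 * \<kappa> / \<epsilon>) \<and>
        (\<forall>f cA cB. 0 \<le> cA \<longrightarrow> 0 \<le> cB \<longrightarrow>
           eps_solver (transpose_mat A * A + \<nu> \<cdot>\<^sub>m 1\<^sub>m d) (1 / (160 * \<kappa>\<^sup>2)) f \<longrightarrow>
           eps_solver (transpose_mat B * B + \<nu> \<cdot>\<^sub>m 1\<^sub>m s) \<epsilon> (run_prog A B f p) \<and>
           (\<forall>b. dim_vec b = s \<longrightarrow>
              prog_cost A B f cA cB p b
                \<le> C * (real n + (cA + real n + real d) + (cB + real n + real s)) * (1 + ln (\<kappa> / \<epsilon>)))))"
  by (intro exI[of _ "100::real"] conjI allI impI precond_setting.cheb_prog_solver precond_setting.intro)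
    simp_all

end
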